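(* Let $p$ be an odd prime, $k\ge2$ and $s>k+2$. Put $S=\sum_{j=0}^{k-1}p^j$, $A_s=2(s-1)p^{k+1}-2(s-k)+3$ and $c_s=\frac{p^{s-2-k}(p-1)}{2}$. For $0\le l<p^k$, the $p^k$-Fibonacci number of $V_{s,l}$ is as follows. (a) If $l=0$: $\mathcal M_{V_{s,l}}=c_sA_s$. (b) If $0\le i\le k-2$, $1\le t\le p-1$ and $(t-1)\sum_{\iota=i}^{k-1}p^\iota+p^i\le l\le (t-1)\sum_{\iota=i+1}^{k-1}p^\iota+p^{i+1}-1$: $\mathcal M_{V_{s,l}}=c_s\big(A_s+2tS-2\sum_{\mu=0}^{k-i-2}p^\mu\big)$ if $1\le t\le\frac{p-1}{2}$, and $\mathcal M_{V_{s,l}}=c_s\big(A_s+(2t-2p)S-2\sum_{\mu=0}^{k-i-2}p^\mu\big)$ if $\frac{p+1}{2}\le t\le p-1$. (c) If $1\le t\le p-1$, $t\ne\frac{p-1}{2}$, and $tp^{k-1}\le l\le tS$: $\mathcal M_{V_{s,l}}=c_s(A_s+2tS)$ if $1\le t\le\frac{p-3}{2}$, and $\mathcal M_{V_{s,l}}=c_s(A_s+(2t-2p)S)$ if $\frac{p+1}{2}\le t\le p-1$. (d) If $1\le i'\le k-1$ and $\frac{p-1}{2}\sum_{\iota=i'}^{k-1}p^\iota\le l\le\frac{p-1}{2}\sum_{\iota=i'-1}^{k-1}p^\iota-1$: $\mathcal M_{V_{s,l}}=c_s\Big(A_s-p^k-2\sum_{\theta=1}^{k-1}p^\theta+2\sum_{\mu=k-i'+1}^{k}p^\mu-1\Big)$.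 (e) If $l=\frac{p-1}{2}S$: $\mathcal M_{V_{s,l}}=c_s\Big(A_s-p^k-2\sum_{\theta=1}^{k-1}p^\theta-1\Big)$.
   Context: Fix an odd prime $p$ and an integer $k\ge 0$. For integers $0\le i<n$ write $\lambda(n,i)=(n-i,1^i)$ for the hook partition of $n$ with $n-i$ boxes in its first row and $i$ further boxes in its first column. If $\mu=\lambda(n',i')$ is obtained from $\lambda(n,i)$ by appending $m=(n'-i')-(n-i)\ge 0$ boxes to the first row and $n''=i'-i\ge 0$ boxes to the first column, we say $\mu$ is obtained by adding the block $B_{m,n''}$ ($m$ horizontal nodes, $n''$ vertical nodes). Put $x_s=p^k(sp-(s+1))$. The relevant part ("column $k$") of the $p$-Bratteli diagram is the graded directed graph with vertices: on floor $2k+1$, $S_i=\lambda(p^k(p-1),i)$ for $0\le i<p^k(p-1)$; on floor $2(k+s)$ ($s\ge1$), $V_{s,l}=\lambda\big(p^k(2sp-(2s+1)),\,x_s+l\big)$ for $0\le l<p^k$; on floor $2(k+s)-1$ ($s\ge2$), $W_{s,l'}=\lambda\big(p^k((2s-1)p-2s),\,x_{s-1}+l'\big)$ for $0\le l'<p^{k+1}$; and edges, each labelled by the block added: (E1) $S_i\to V_{1,l}$ exactly when $i=p^kt+l$ with $0\le t\le p-2$, block $B_{p^kt,\,p^k(p-2-t)}$; (E2) for $s\ge2$, $0\le l<p^k$, $0\le\beta\le p-1$: $V_{s-1,l}\to W_{s,pl+\beta}$, block $B_{p^k(p-1)-((p-1)l+\beta),\,(p-1)l+\beta}$; (E3) for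 $s\ge 2$, $0\le l'<p^{k+1}$ and $t=\lfloor l'/p^k\rfloor$: $W_{s,l'}\to V_{s,l'-p^kt}$, block $B_{p^kt,\,p^k(p-1-t)}$. A path ending at a vertex $v$ is a sequence of edges starting at some $S_i$ and going up one floor at a time to $v$ ($S_i\to V_{1,\cdot}\to W_{2,\cdot}\to V_{2,\cdot}\to W_{3,\cdot}\to\cdots\to v$); $\mathcal P(v)$ is the set of all paths ending at $v$. The blocks of a path are numbered $B^2,B^3,\dots,B^N$: $B^2$ is the block of the edge leaving $S_i$, and for $j\ge2$, $B^{2j-1}$ is the block of the edge into $W_{j,\cdot}$ and $B^{2j}$ the block of the edge into $V_{j,\cdot}$. Write $B^j=B_{m_j,n_j}$. Descents: $1\in\mathrm{Des}(P)$ iff $m_2=p^kt$ with $0\le t<\frac{p-1}{2}$; $2\notin\mathrm{Des}(P)$; for $3\le j<N$, $j\in\mathrm{Des}(P)$ iff $m_j>m_{j+1}$ and $n_j<n_{j+1}$. $\mathrm{des}(P)=|\mathrm{Des}(P)|$. The $p^k$-Fibonacci number of a vertex $v$ is $\mathcal M_v=\sum_{P\in\mathcal P(v)}\mathrm{des}(P)$. *)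

theory Defs
  imports Complex_Main "HOL-Computational_Algebra.Primes"
begin

text \<open>Vertices of column k of the p-Bratteli diagram:
  Sv i = S_i (floor 2k+1), Vv s l = V_{s,l} (floor 2(k+s)), Wv s l' = W_{s,l'} (floor 2(k+s)-1).\<close>
datatype vtx = Sv nat | Vv nat nat | Wv nat nat

text \<open>A block B_{m,n} is the pair (m,n) (m horizontal, n vertical nodes).
  Labelled edges (source, block, target).\<close>
definition edges :: "nat \<Rightarrow> nat \<Rightarrow> (vtx \<times> (nat \<times> nat) \<times> vtx) set" where
  "edges p k =
     {(Sv i, (p^k * t, p^k * (p - 2 - t)), Vv 1 l) | i t l.
        i < p^k * (p - 1) \<and> l < p^k \<and> t \<le> p - 2 \<and> i = p^k * t + l}
   \<union> {(Vv (s - 1) l, (p^k * (p - 1) - ((p - 1) * l + \<beta>), (p - 1) * l + \<beta>), Wv s (p * l + \<beta>)) | s l \<beta>.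
        2 \<le> s \<and> l < p^k \<and> \<beta> \<le> p - 1}
   \<union> {(Wv s l', (p^k * (l' div p^k), p^k * (p - 1 - l' div p^k)), Vv s (l' - p^k * (l' div p^k))) | s l'.
        2 \<le> s \<and> l' < p^(k+1)}"

definition is_path :: "nat \<Rightarrow> nat \<Rightarrow> (vtx \<times> (nat \<times> nat) \<times> vtx) list \<Rightarrow> vtx \<Rightarrow> bool" where
  "is_path p k es v \<longleftrightarrow>
     es \<noteq> [] \<and> set es \<subseteq> edges p k \<and> (\<exists>i. fst (hd es) = Sv i) \<and>
     (\<forall>j. j + 1 < length es \<longrightarrow> snd (snd (es ! j)) = fst (es ! (j + 1))) \<and>
     snd (snd (last es)) = v"

definition paths :: "nat \<Rightarrow> nat \<Rightarrow> vtx \<Rightarrow> (vtx \<times> (nat \<times> nat) \<times> vtx) list set" where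
  "paths p k v = {es. is_path p k es v}"

text \<open>Block B^j of a path (j \<ge> 2): the block of its (j-1)-th edge.  N = length + 1.\<close>
definition blk :: "(vtx \<times> (nat \<times> nat) \<times> vtx) list \<Rightarrow> nat \<Rightarrow> nat \<times> nat" where
  "blk es j = fst (snd (es ! (j - 2)))"

definition Des :: "nat \<Rightarrow> nat \<Rightarrow> (vtx \<times> (nat \<times> nat) \<times> vtx) list \<Rightarrow> nat set" where
  "Des p k es =
     {j. j = 1 \<and> (\<exists>t. fst (blk es 2) = p^k * t \<and> 2 * t < p - 1)}
     \<union> {j. 3 \<le> j \<and> j < length es + 1 \<and>
          fst (blk es j) > fst (blk es (j + 1)) \<and> snd (blk es j) < snd (blk es (j + 1))}"

definition des :: "nat \<Rightarrow> nat \<Rightarrow> (vtx \<times> (nat \<times> nat) \<times> vtx) list \<Rightarrow> nat" where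
  "des p k es = card (Des p k es)"

definition fibM :: "nat \<Rightarrow> nat \<Rightarrow> vtx \<Rightarrow> nat" where
  "fibM p k v = (\<Sum>P\<in>paths p k v. des p k P)"

end

theory Submission
  imports Defs
begin

text \<open>
  A path to \<open>V(s, l)\<close> with \<open>s \<ge> 2\<close> is, uniquely, a path to \<open>V(s - 1, (l + p\<^sup>k t) div p)\<close>
  for some \<open>t < p\<close>, extended by the two edges through \<open>W(s, l + p\<^sup>k t)\<close>. Hence there are
  \<open>(p - 1) p\<^sup>s\<^sup>-\<^sup>1\<close> paths to \<open>V(s, l)\<close>, and \<open>M\<close> at \<open>V(s, l)\<close> is the sum of \<open>M\<close> over these
  \<open>p\<close> predecessors plus the descents created by the two new blocks: one between the W-block and
  the new V-block, one between the previous V-block and the W-block.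

  Write \<open>p = 2n + 1\<close> and \<open>R m = 1 + p + \<dots> + p\<^sup>m\<^sup>-\<^sup>1\<close>. For the W-label \<open>y = l + p\<^sup>k t\<close> the first
  descent occurs iff \<open>2y + 1 < p\<^sup>k\<^sup>+\<^sup>1\<close>, and the number of \<open>t' < p\<close> whose V-block descends into
  the W-block of label \<open>y\<close> is the number of \<open>u < p\<close> with \<open>u R (k + 1) < y\<close>. Unrolling the
  recursion, both counts get summed over arithmetic progressions of labels, where they can be
  evaluated digit by digit in base \<open>p\<close>. Levels at distance at least \<open>k\<close> below \<open>V(s, l)\<close>
  contribute a quantity independent of \<open>l\<close>, and for \<open>s > k + 2\<close> one obtains
  \<open>M = c\<^sub>s (A\<^sub>s - 2pS + 2 W l)\<close>, where \<open>W l\<close> (\<open>digit_weight\<close>) is a weighted sum over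
  \<open>j < k\<close> of \<open>p [2 (l div p\<^sup>j) + 1 < p\<^sup>k\<^sup>-\<^sup>j]\<close> and the number of \<open>u < p\<close> with
  \<open>u R (k - j) < l div p\<^sup>j\<close>. On each of the five ranges of \<open>l\<close> in the theorem these summands take
  at most two values, which gives the closed forms.
\<close>

section \<open>Blocks, edges and paths\<close>

type_synonym edge = "vtx \<times> (nat \<times> nat) \<times> vtx"

definition block_V :: "nat \<Rightarrow> nat \<Rightarrow> nat \<Rightarrow> nat \<times> nat" where
  "block_V p k t = (p^k * t, p^k * (p - 1 - t))"

text \<open>For \<open>y = p * l + \<beta>\<close> with \<open>\<beta> < p\<close> the edge \<open>V(s - 1, l) \<rightarrow> W(s, y)\<close> adds
  \<open>(p - 1) * l + \<beta> = y - y div p\<close> vertical nodes.\<close>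
definition block_W :: "nat \<Rightarrow> nat \<Rightarrow> nat \<Rightarrow> nat \<times> nat" where
  "block_W p k y = (p^k * (p - 1) - (y - y div p), y - y div p)"

definition edge_SV :: "nat \<Rightarrow> nat \<Rightarrow> nat \<Rightarrow> nat \<Rightarrow> edge" where
  "edge_SV p k l t = (Sv (p^k * t + l), (p^k * t, p^k * (p - 2 - t)), Vv 1 l)"

definition edge_VW :: "nat \<Rightarrow> nat \<Rightarrow> nat \<Rightarrow> nat \<Rightarrow> edge" where
  "edge_VW p k s y = (Vv (s - 1) (y div p), block_W p k y, Wv s y)"

definition edge_WV :: "nat \<Rightarrow> nat \<Rightarrow> nat \<Rightarrow> nat \<Rightarrow> nat \<Rightarrow> edge" where
  "edge_WV p k s l t = (Wv s (l + p^k * t), block_V p k t, Vv s l)"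

lemma W_label_less:
  fixes p :: nat
  assumes "l < p^k" "t < p"
  shows "l + p^k * t < p^(k+1)"
proof -
  have "l + p^k * t < p^k * (t + 1)" using assms(1) by simp
  also have "\<dots> \<le> p^k * p" using assms(2) by (intro mult_le_mono2) linarith
  finally show ?thesis by (simp add: mult.commute)
qed

lemma parent_label_less:
  fixes p :: nat
  assumes "l < p^k" "t < p"
  shows "(l + p^k * t) div p < p^k"
  using W_label_less[OF assms] assms(2) by (simp add: div_less_iff_less_mult mult.commute)

lemma pred_mult_div_add_mod:
  fixes p :: nat
  assumes "0 < p"
  shows "(p - 1) * (y div p) + y mod p = y - y div p"
proof -
  have "(p - 1) * (y div p) + y div p = p * (y div p)" using assms by (simp add: algebra_simps)
  moreover have "y = p * (y div p) + y mod p" by simp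
  ultimately show ?thesis by linarith
qed

lemma mem_edges: "e \<in> edges p k \<longleftrightarrow>
  (\<exists>i t l. e = (Sv i, (p^k * t, p^k * (p - 2 - t)), Vv 1 l) \<and>
        i < p^k * (p - 1) \<and> l < p^k \<and> t \<le> p - 2 \<and> i = p^k * t + l) \<or>
  (\<exists>s l \<beta>. e = (Vv (s - 1) l, (p^k * (p - 1) - ((p - 1) * l + \<beta>), (p - 1) * l + \<beta>), Wv s (p * l + \<beta>)) \<and>
        2 \<le> s \<and> l < p^k \<and> \<beta> \<le> p - 1) \<or>
  (\<exists>s l'. e = (Wv s l', (p^k * (l' div p^k), p^k * (p - 1 - l' div p^k)), Vv s (l' - p^k * (l' div p^k))) \<and>
        2 \<le> s \<and> l' < p^(k+1))"
  unfolding edges_def by blast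

lemma no_edge_into_S: "(x, b, Sv i) \<notin> edges p k"
  unfolding mem_edges by auto

lemma edge_into_V1_iff:
  assumes "2 \<le> p"
  shows "(x, b, Vv 1 l) \<in> edges p k \<longleftrightarrow>
    (\<exists>t \<le> p - 2. l < p^k \<and> (x, b, Vv 1 l) = edge_SV p k l t)"
proof
  assume "(x, b, Vv 1 l) \<in> edges p k"
  then show "\<exists>t \<le> p - 2. l < p^k \<and> (x, b, Vv 1 l) = edge_SV p k l t"
    unfolding mem_edges edge_SV_def by auto
next
  assume "\<exists>t \<le> p - 2. l < p^k \<and> (x, b, Vv 1 l) = edge_SV p k l t"
  then obtain t where t: "t \<le> p - 2" "l < p^k" "(x, b, Vv 1 l) = edge_SV p k l t" by blast
  have "p^k * t + l < p^k * (t + 1)" using t(2) by simp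
  also have "\<dots> \<le> p^k * (p - 1)" using t(1) assms by (intro mult_le_mono2) linarith
  finally show "(x, b, Vv 1 l) \<in> edges p k"
    using t unfolding mem_edges edge_SV_def by blast
qed

lemma edge_into_V_iff:
  assumes "2 \<le> s" "0 < p"
  shows "(x, b, Vv s l) \<in> edges p k \<longleftrightarrow>
    (\<exists>t < p. l < p^k \<and> (x, b, Vv s l) = edge_WV p k s l t)"
proof
  assume "(x, b, Vv s l) \<in> edges p k"
  then obtain y where y: "y < p^(k+1)" "x = Wv s y" "b = (p^k * (y div p^k), p^k * (p - 1 - y div p^k))"
    "l = y - p^k * (y div p^k)"
    using assms(1) unfolding mem_edges by auto
  define t where "t = y div p^k"
  have "l = y mod p^k" using y(4) by (simp add: minus_mult_div_eq_mod)
  then have "y = l + p^k * t" "l < p^k" using assms(2) unfolding t_def by simp_all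
  moreover have "t < p" using y(1) unfolding t_def by (simp add: less_mult_imp_div_less mult.commute)
  ultimately show "\<exists>t < p. l < p^k \<and> (x, b, Vv s l) = edge_WV p k s l t"
    using y unfolding edge_WV_def block_V_def t_def by auto
next
  assume "\<exists>t < p. l < p^k \<and> (x, b, Vv s l) = edge_WV p k s l t"
  then obtain t where t: "t < p" "l < p^k" "(x, b, Vv s l) = edge_WV p k s l t" by blast
  have "(l + p^k * t) div p^k = t" using t(2) assms(2) by simp
  then show "(x, b, Vv s l) \<in> edges p k"
    using t W_label_less[OF t(2,1)] assms(1) unfolding mem_edges edge_WV_def block_V_def
    by (intro disjI2) (rule exI[of _ s], rule exI[of _ "l + p^k * t"], simp)
qed

lemma edge_into_W_iff:
  assumes "0 < p"
  shows "(x, b, Wv s y) \<in> edges p k \<longleftrightarrow>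
    2 \<le> s \<and> y < p^(k+1) \<and> (x, b, Wv s y) = edge_VW p k s y"
proof
  assume "(x, b, Wv s y) \<in> edges p k"
  then obtain l \<beta> where h: "2 \<le> s" "l < p^k" "\<beta> \<le> p - 1" "y = p * l + \<beta>" "x = Vv (s - 1) l"
    "b = (p^k * (p - 1) - ((p - 1) * l + \<beta>), (p - 1) * l + \<beta>)"
    unfolding mem_edges by auto
  have \<beta>: "\<beta> < p" using h(3) assms by linarith
  then have "y div p = l" "y mod p = \<beta>" using h(4) by auto
  moreover have "y < p^(k+1)"
  proof -
    have "y < p * (l + 1)" using h(4) \<beta> by simp
    also have "\<dots> \<le> p * p^k" using h(2) by (intro mult_le_mono2) linarith
    finally show ?thesis by simp
  qed
  ultimately show "2 \<le> s \<and> y < p^(k+1) \<and> (x, b, Wv s y) = edge_VW p k s y"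
    using h pred_mult_div_add_mod[OF assms, of y] unfolding edge_VW_def block_W_def by simp
next
  assume h: "2 \<le> s \<and> y < p^(k+1) \<and> (x, b, Wv s y) = edge_VW p k s y"
  have "y div p < p^k" using h assms by (simp add: div_less_iff_less_mult mult.commute)
  moreover have "y mod p \<le> p - 1" using assms by (simp add: less_Suc_eq_le[symmetric])
  moreover have "y = p * (y div p) + y mod p" by simp
  ultimately show "(x, b, Wv s y) \<in> edges p k" using h pred_mult_div_add_mod[OF assms, of y]
    unfolding mem_edges edge_VW_def block_W_def
    by (intro disjI2 disjI1) (rule exI[of _ s], rule exI[of _ "y div p"], rule exI[of _ "y mod p"], simp)
qed

lemma is_path_single: "is_path p k [e] v \<longleftrightarrow> e \<in> edges p k \<and> (\<exists>i. fst e = Sv i) \<and> snd (snd e) = v"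
  unfolding is_path_def by auto

lemma is_path_snoc:
  assumes "es \<noteq> []"
  shows "is_path p k (es @ [e]) v \<longleftrightarrow> is_path p k es (fst e) \<and> e \<in> edges p k \<and> snd (snd e) = v"
proof -
  have "(\<forall>j. j + 1 < length (es @ [e]) \<longrightarrow> snd (snd ((es @ [e]) ! j)) = fst ((es @ [e]) ! (j + 1)))
     \<longleftrightarrow> (\<forall>j. j + 1 < length es \<longrightarrow> snd (snd (es ! j)) = fst (es ! (j + 1))) \<and> snd (snd (last es)) = fst e"
    (is "(\<forall>j. ?C' j) \<longleftrightarrow> (\<forall>j. ?C j) \<and> ?L")
  proof
    assume H: "\<forall>j. ?C' j"
    have "?C j" for j using H[rule_format, of j] by (simp add: nth_append)
    moreover have ?L using H[rule_format, of "length es - 1"] assms by (simp add: nth_append last_conv_nth)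
    ultimately show "(\<forall>j. ?C j) \<and> ?L" by blast
  next
    assume H: "(\<forall>j. ?C j) \<and> ?L"
    show "\<forall>j. ?C' j"
    proof (intro allI impI)
      fix j assume j: "j + 1 < length (es @ [e])"
      show "snd (snd ((es @ [e]) ! j)) = fst ((es @ [e]) ! (j + 1))"
      proof (cases "j + 1 < length es")
        case True then show ?thesis using H by (simp add: nth_append)
      next
        case False
        then have "j = length es - 1" using j by simp
        then show ?thesis using H assms by (simp add: nth_append last_conv_nth)
      qed
    qed
  qed
  then show ?thesis unfolding is_path_def using assms by auto
qed

lemma paths_not_Nil: "es \<in> paths p k v \<Longrightarrow> es \<noteq> []"
  unfolding paths_def is_path_def by auto

lemma paths_snocE:
  assumes "es \<in> paths p k v"
  obtains es' e where "es = es' @ [e]" "e \<in> edges p k" "snd (snd e) = v"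
    "es' = [] \<and> (\<exists>i. fst e = Sv i) \<or> es' \<in> paths p k (fst e)"
proof -
  obtain es' e where es: "es = es' @ [e]" using paths_not_Nil[OF assms] by (metis rev_exhaust)
  show ?thesis
  proof (cases "es' = []")
    case True
    then show ?thesis using that[OF es] assms unfolding es paths_def by (simp add: is_path_single)
  next
    case False
    then show ?thesis using that[OF es] assms unfolding es paths_def by (simp add: is_path_snoc)
  qed
qed

lemma paths_Sv: "paths p k (Sv i) = {}"
  using no_edge_into_S by (fastforce elim: paths_snocE)

lemma paths_V1:
  assumes "2 \<le> p" "l < p^k"
  shows "paths p k (Vv 1 l) = (\<lambda>t. [edge_SV p k l t]) ` {..p - 2}"
proof
  show "paths p k (Vv 1 l) \<subseteq> (\<lambda>t. [edge_SV p k l t]) ` {..p - 2}"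
  proof
    fix es assume "es \<in> paths p k (Vv 1 l)"
    then obtain es' e where es: "es = es' @ [e]" "e \<in> edges p k" "snd (snd e) = Vv 1 l"
      "es' = [] \<and> (\<exists>i. fst e = Sv i) \<or> es' \<in> paths p k (fst e)"
      by (rule paths_snocE)
    obtain t where "t \<le> p - 2" "e = edge_SV p k l t"
      using es(2,3) edge_into_V1_iff[OF assms(1)] by (metis prod.collapse)
    moreover have "es' = []" using es(4) paths_Sv unfolding \<open>e = edge_SV p k l t\<close> edge_SV_def by auto
    ultimately show "es \<in> (\<lambda>t. [edge_SV p k l t]) ` {..p - 2}" using es(1) by auto
  qed
next
  show "(\<lambda>t. [edge_SV p k l t]) ` {..p - 2} \<subseteq> paths p k (Vv 1 l)"
  proof
    fix es assume "es \<in> (\<lambda>t. [edge_SV p k l t]) ` {..p - 2}"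
    then obtain t where t: "t \<le> p - 2" "es = [edge_SV p k l t]" by auto
    have "edge_SV p k l t \<in> edges p k" using edge_into_V1_iff[OF assms(1)] t(1) assms(2)
      unfolding edge_SV_def by blast
    then show "es \<in> paths p k (Vv 1 l)" unfolding t(2) by (simp add: paths_def is_path_single edge_SV_def)
  qed
qed

lemma paths_V:
  assumes "2 \<le> s" "0 < p" "l < p^k"
  shows "paths p k (Vv s l) = (\<lambda>(t, es). es @ [edge_VW p k s (l + p^k * t), edge_WV p k s l t]) `
           (SIGMA t:{..<p}. paths p k (Vv (s - 1) ((l + p^k * t) div p)))"
    (is "_ = ?ext ` ?Sigma")
proof
  show "paths p k (Vv s l) \<subseteq> ?ext ` ?Sigma"
  proof
    fix es assume "es \<in> paths p k (Vv s l)"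
    then obtain es' e where es: "es = es' @ [e]" "e \<in> edges p k" "snd (snd e) = Vv s l"
      "es' = [] \<and> (\<exists>i. fst e = Sv i) \<or> es' \<in> paths p k (fst e)"
      by (rule paths_snocE)
    obtain t where t: "t < p" "e = edge_WV p k s l t"
      using es(2,3) edge_into_V_iff[OF assms(1,2)] by (metis prod.collapse)
    have "es' \<in> paths p k (Wv s (l + p^k * t))" using es(4) t(2) unfolding edge_WV_def by auto
    then obtain es'' e' where es': "es' = es'' @ [e']" "e' \<in> edges p k" "snd (snd e') = Wv s (l + p^k * t)"
      "es'' = [] \<and> (\<exists>i. fst e' = Sv i) \<or> es'' \<in> paths p k (fst e')"
      by (rule paths_snocE)
    have e': "e' = edge_VW p k s (l + p^k * t)"
      using es'(2,3) edge_into_W_iff[OF assms(2)] by (metis prod.collapse)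
    then have "es'' \<in> paths p k (Vv (s - 1) ((l + p^k * t) div p))" using es'(4) unfolding edge_VW_def by auto
    then show "es \<in> ?ext ` ?Sigma"
      using t unfolding es es' e' by (intro image_eqI[of _ _ "(t, es'')"]) auto
  qed
next
  show "?ext ` ?Sigma \<subseteq> paths p k (Vv s l)"
  proof
    fix es assume "es \<in> ?ext ` ?Sigma"
    then obtain t es' where t: "t < p" "es' \<in> paths p k (Vv (s - 1) ((l + p^k * t) div p))"
      "es = es' @ [edge_VW p k s (l + p^k * t), edge_WV p k s l t]" by auto
    have VW: "edge_VW p k s (l + p^k * t) \<in> edges p k"
      using edge_into_W_iff[OF assms(2)] assms(1) W_label_less[OF assms(3) t(1)] unfolding edge_VW_def by blast
    have WV: "edge_WV p k s l t \<in> edges p k"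
      using edge_into_V_iff[OF assms(1,2)] assms(3) t(1) unfolding edge_WV_def by blast
    have "is_path p k es' (Vv (s - 1) ((l + p^k * t) div p))" using t(2) unfolding paths_def by simp
    then have "is_path p k (es' @ [edge_VW p k s (l + p^k * t)]) (Wv s (l + p^k * t))"
      using VW paths_not_Nil[OF t(2)] by (simp add: is_path_snoc edge_VW_def)
    then have "is_path p k ((es' @ [edge_VW p k s (l + p^k * t)]) @ [edge_WV p k s l t]) (Vv s l)"
      using WV by (subst is_path_snoc) (simp_all add: edge_VW_def edge_WV_def)
    then show "es \<in> paths p k (Vv s l)" unfolding paths_def t(3) by simp
  qed
qed

lemma inj_on_extend_path:
  assumes "0 < p"
  shows "inj_on (\<lambda>(t, es). es @ [edge_VW p k s (l + p^k * t), edge_WV p k s l t]) A"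
  using assms by (auto intro!: inj_onI simp: edge_WV_def)

lemma card_paths_V:
  assumes "2 \<le> p" "1 \<le> s" "l < p^k"
  shows "finite (paths p k (Vv s l)) \<and> card (paths p k (Vv s l)) = (p - 1) * p^(s - 1)"
  using assms(2,3)
proof (induction s arbitrary: l rule: dec_induct)
  case base
  have "inj_on (\<lambda>t. [edge_SV p k l t]) {..p - 2}" using assms(1) by (auto intro!: inj_onI simp: edge_SV_def)
  then show ?case using paths_V1[OF assms(1) base] assms(1) by (simp add: card_image)
next
  case (step s)
  have p0: "0 < p" using assms(1) by simp
  let ?Sigma = "SIGMA t:{..<p}. paths p k (Vv s ((l + p^k * t) div p))"
  have IH: "finite (paths p k (Vv s ((l + p^k * t) div p)))"
    "card (paths p k (Vv s ((l + p^k * t) div p))) = (p - 1) * p^(s - 1)" if "t < p" for t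
    using step.IH[OF parent_label_less[OF step.prems that]] by auto
  have "card ?Sigma = p * ((p - 1) * p^(s - 1))" using IH by (subst card_SigmaI) auto
  also have "\<dots> = (p - 1) * p^(Suc s - 1)" using step.hyps by (cases s) auto
  moreover have "finite ?Sigma" using IH by auto
  moreover have "paths p k (Vv (Suc s) l) =
      (\<lambda>(t, es). es @ [edge_VW p k (Suc s) (l + p^k * t), edge_WV p k (Suc s) l t]) ` ?Sigma"
    using paths_V[of "Suc s" p l k] step.hyps step.prems p0 by simp
  ultimately show ?case by (simp add: card_image[OF inj_on_extend_path[OF p0]])
qed

section \<open>Descents and the recursion for \<open>M\<close>\<close>

lemma card_lessThan_filter:
  fixes N :: nat
  shows "card {u. u < N \<and> P u} = (\<Sum>u<N. if P u then 1 else 0)"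
  by (simp add: sum.If_cases Collect_conj_eq lessThan_def Int_commute)

definition block_descent :: "nat \<times> nat \<Rightarrow> nat \<times> nat \<Rightarrow> bool" where
  "block_descent b b' \<longleftrightarrow> fst b' < fst b \<and> snd b < snd b'"

lemma des_path_V1:
  assumes "0 < p"
  shows "des p k [edge_SV p k l t] = (if 2 * t < p - 1 then 1 else 0)"
proof -
  have "Des p k [edge_SV p k l t] = (if 2 * t < p - 1 then {1} else {})"
    using assms unfolding Des_def blk_def edge_SV_def by auto
  then show ?thesis unfolding des_def by simp
qed

lemma Des_subset: "es \<noteq> [] \<Longrightarrow> Des p k es \<subseteq> {..length es}"
  unfolding Des_def by (cases es) auto

text \<open>The two new block comparisons sit at positions \<open>L + 1\<close> and \<open>L + 2\<close>, \<open>L = length es\<close>;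
  the first one counts only when \<open>L + 1 \<ge> 3\<close>.\<close>
lemma des_append_two:
  assumes "es \<noteq> []"
  shows "des p k (es @ [a, b]) = des p k es
     + (if 2 \<le> length es \<and> block_descent (fst (snd (last es))) (fst (snd a)) then 1 else 0)
     + (if block_descent (fst (snd a)) (fst (snd b)) then 1 else 0)"
proof -
  define L where "L = length es"
  have L1: "1 \<le> L" using assms L_def by (cases es) auto
  have blk_old: "blk (es @ [a, b]) j = blk es j" if "j \<le> L + 1" for j
  proof -
    have "j - 2 < L" using that L1 by linarith
    then show ?thesis unfolding blk_def L_def by (simp add: nth_append)
  qed
  have blk_new: "blk (es @ [a, b]) (Suc L) = fst (snd (last es))"
    "blk (es @ [a, b]) (Suc (Suc L)) = fst (snd a)" "blk (es @ [a, b]) (Suc (Suc (Suc L))) = fst (snd b)"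
    using assms unfolding blk_def L_def by (simp_all add: nth_append last_conv_nth)
  define X where "X = (if 2 \<le> L \<and> block_descent (fst (snd (last es))) (fst (snd a)) then {L + 1} else {})"
  define Y where "Y = (if block_descent (fst (snd a)) (fst (snd b)) then {L + 2} else {})"
  have eq: "Des p k (es @ [a, b]) = Des p k es \<union> X \<union> Y"
  proof (rule set_eqI)
    fix j
    consider "j \<le> L" | "j = L + 1" | "j = L + 2" | "L + 2 < j" by linarith
    then show "j \<in> Des p k (es @ [a, b]) \<longleftrightarrow> j \<in> Des p k es \<union> X \<union> Y"
    proof cases
      case 1
      then show ?thesis using blk_old[of 2] blk_old[of j] blk_old[of "j + 1"] L1
        unfolding Des_def X_def Y_def L_def by auto
    next
      case 2
      then show ?thesis using blk_new blk_old[of 2] L1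
        unfolding Des_def X_def Y_def block_descent_def by (auto simp: L_def)
    next
      case 3
      then show ?thesis using blk_new L1
        unfolding Des_def X_def Y_def block_descent_def by (auto simp: L_def)
    qed (auto simp: Des_def X_def Y_def L_def)
  qed
  have "finite (Des p k es)" using Des_subset[OF assms] finite_subset by blast
  moreover have "Des p k es \<inter> X = {}" "(Des p k es \<union> X) \<inter> Y = {}"
    using Des_subset[OF assms, of p k] unfolding X_def Y_def L_def by auto
  ultimately have "card (Des p k (es @ [a, b])) = card (Des p k es) + card X + card Y"
    unfolding eq by (simp add: card_Un_disjoint X_def Y_def)
  then show ?thesis unfolding des_def X_def Y_def L_def by simp
qed

lemma fibM_V1:
  assumes "2 \<le> p" "l < p^k"
  shows "fibM p k (Vv 1 l) = card {t. t \<le> p - 2 \<and> 2 * t < p - 1}"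
proof -
  have "inj_on (\<lambda>t. [edge_SV p k l t]) {..p - 2}" using assms(1) by (auto intro!: inj_onI simp: edge_SV_def)
  then have "fibM p k (Vv 1 l) = (\<Sum>t\<le>p - 2. des p k [edge_SV p k l t])"
    unfolding fibM_def paths_V1[OF assms] by (simp add: sum.reindex)
  also have "\<dots> = (\<Sum>t\<le>p - 2. if 2 * t < p - 1 then 1 else 0)"
    using assms(1) by (intro sum.cong) (auto simp: des_path_V1)
  finally show ?thesis by (simp add: sum.If_cases Collect_conj_eq atMost_def Int_commute)
qed

lemma sum_paths_last_block:
  assumes "2 \<le> p" "2 \<le> s" "l < p^k"
  shows "(\<Sum>es\<in>paths p k (Vv s l). if 2 \<le> length es \<and> P (fst (snd (last es))) then 1 else 0 :: nat)
     = (p - 1) * p^(s - 2) * card {t. t < p \<and> P (block_V p k t)}"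
proof -
  have p0: "0 < p" using assms(1) by simp
  define A where "A t = paths p k (Vv (s - 1) ((l + p^k * t) div p))" for t
  have A: "finite (A t)" "card (A t) = (p - 1) * p^(s - 2)" if "t < p" for t
    using card_paths_V[OF assms(1) _ parent_label_less[OF assms(3) that], of "s - 1"] assms(2)
    unfolding A_def by (simp_all add: numeral_2_eq_2)
  have "(\<Sum>es\<in>paths p k (Vv s l). if 2 \<le> length es \<and> P (fst (snd (last es))) then 1 else 0 :: nat)
     = (\<Sum>(t, es)\<in>Sigma {..<p} A. if P (block_V p k t) then 1 else 0)"
    unfolding paths_V[OF assms(2) p0 assms(3)] A_def[symmetric]
    by (subst sum.reindex[OF inj_on_extend_path[OF p0]]) (simp add: case_prod_unfold edge_WV_def)
  also have "\<dots> = (\<Sum>t<p. \<Sum>es\<in>A t. if P (block_V p k t) then 1 else 0)"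
    using A by (subst sum.Sigma) auto
  also have "\<dots> = (\<Sum>t<p. (p - 1) * p^(s - 2) * (if P (block_V p k t) then 1 else 0))"
    using A by (intro sum.cong) auto
  finally show ?thesis by (simp add: card_lessThan_filter sum_distrib_left)
qed

lemma fibM_V_rec:
  assumes "2 \<le> p" "2 \<le> s" "l < p^k"
  shows "fibM p k (Vv s l) = (\<Sum>t<p. fibM p k (Vv (s - 1) ((l + p^k * t) div p)))
     + (p - 1) * p^(s - 2) * card {t. t < p \<and> block_descent (block_W p k (l + p^k * t)) (block_V p k t)}
     + (if 3 \<le> s then (p - 1) * p^(s - 3) *
          (\<Sum>t<p. card {t'. t' < p \<and> block_descent (block_V p k t') (block_W p k (l + p^k * t))}) else 0)"
proof -
  have p0: "0 < p" using assms(1) by simp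
  define A where "A t = paths p k (Vv (s - 1) ((l + p^k * t) div p))" for t
  have A: "finite (A t)" "card (A t) = (p - 1) * p^(s - 2)" if "t < p" for t
    using card_paths_V[OF assms(1) _ parent_label_less[OF assms(3) that], of "s - 1"] assms(2)
    unfolding A_def by (simp_all add: numeral_2_eq_2)
  have ne: "es \<noteq> []" if "es \<in> A t" for es t using that paths_not_Nil unfolding A_def by blast
  define X where "X t (es :: edge list) = (if 2 \<le> length es \<and> block_descent (fst (snd (last es))) (block_W p k (l + p^k * t))
     then 1 else 0 :: nat)" for t es
  define Y where "Y t = (if block_descent (block_W p k (l + p^k * t)) (block_V p k t) then 1 else 0 :: nat)" for t
  have "fibM p k (Vv s l) = (\<Sum>(t, es)\<in>Sigma {..<p} A. des p k (es @ [edge_VW p k s (l + p^k * t), edge_WV p k s l t]))"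
    unfolding fibM_def paths_V[OF assms(2) p0 assms(3)] A_def[symmetric]
    by (subst sum.reindex[OF inj_on_extend_path[OF p0]]) (simp add: case_prod_unfold)
  also have "\<dots> = (\<Sum>t<p. \<Sum>es\<in>A t. des p k es + X t es + Y t)"
    using A ne by (subst sum.Sigma) (auto simp: des_append_two edge_VW_def edge_WV_def X_def Y_def intro!: sum.cong)
  also have "\<dots> = (\<Sum>t<p. fibM p k (Vv (s - 1) ((l + p^k * t) div p))) + (\<Sum>t<p. \<Sum>es\<in>A t. X t es)
       + (p - 1) * p^(s - 2) * (\<Sum>t<p. Y t)"
    using A unfolding fibM_def A_def by (simp add: sum.distrib sum_distrib_left)
  also have "(\<Sum>t<p. Y t) = card {t. t < p \<and> block_descent (block_W p k (l + p^k * t)) (block_V p k t)}"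
    unfolding Y_def card_lessThan_filter ..
  also have "(\<Sum>t<p. \<Sum>es\<in>A t. X t es) = (if 3 \<le> s then (p - 1) * p^(s - 3) *
          (\<Sum>t<p. card {t'. t' < p \<and> block_descent (block_V p k t') (block_W p k (l + p^k * t))}) else 0)"
  proof (cases "3 \<le> s")
    case True
    have "(\<Sum>es\<in>A t. X t es) = (p - 1) * p^(s - 3) *
        card {t'. t' < p \<and> block_descent (block_V p k t') (block_W p k (l + p^k * t))}" if "t < p" for t
      using sum_paths_last_block[OF assms(1) _ parent_label_less[OF assms(3) that], of "s - 1"
          "\<lambda>b. block_descent b (block_W p k (l + p^k * t))"] True
      unfolding A_def X_def by (simp add: numeral_3_eq_3 numeral_2_eq_2)
    then show ?thesis using True by (simp add: sum_distrib_left)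
  next
    case False
    then have "s - 1 = 1" using assms(2) by simp
    then have "length es = 1" if "t < p" "es \<in> A t" for t es
      using that paths_V1[OF assms(1) parent_label_less[OF assms(3)]] unfolding A_def by auto
    then show ?thesis using False unfolding X_def by simp
  qed
  finally show ?thesis by simp
qed

section \<open>Repunits in an odd base\<close>

definition repunit :: "nat \<Rightarrow> nat \<Rightarrow> nat" where
  "repunit p m = (\<Sum>j<m. p^j)"

lemma repunit_0 [simp]: "repunit p 0 = 0"
  unfolding repunit_def by simp

lemma repunit_Suc: "repunit p (Suc m) = p * repunit p m + 1"
  unfolding repunit_def by (subst sum.lessThan_Suc_shift) (simp add: sum_distrib_left)

lemma repunit_Suc': "repunit p (Suc m) = repunit p m + p^m"
  unfolding repunit_def by simp

lemma repunit_add: "repunit p (a + b) = repunit p a * p^b + repunit p b"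
  by (induction b) (simp_all add: repunit_Suc algebra_simps)

lemma repunit_pos: "0 < m \<Longrightarrow> 0 < repunit p m"
  by (cases m) (simp_all add: repunit_Suc)

lemma diff_div_mono:
  fixes p :: nat
  assumes "a \<le> b"
  shows "a - a div p \<le> b - b div p"
proof -
  have "x - x div p \<le> Suc x - Suc x div p" for x
    using div_Suc[of x p] div_le_dividend[of x p] by (auto split: if_splits)
  then show ?thesis using lift_Suc_mono_le[of "\<lambda>x. x - x div p"] assms by blast
qed

lemma repunit_diff_div:
  fixes p :: nat
  assumes "u < p"
  shows "u * repunit p (Suc k) - u * repunit p (Suc k) div p = u * p^k"
proof -
  have "u * repunit p (Suc k) = p * (u * repunit p k) + u" by (simp add: repunit_Suc algebra_simps)
  then have "u * repunit p (Suc k) div p = u * repunit p k" using assms by simp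
  moreover have "u * repunit p (Suc k) = u * repunit p k + u * p^k" by (simp add: repunit_Suc' algebra_simps)
  ultimately show ?thesis by simp
qed

lemma repunit_Suc_diff_div:
  fixes p :: nat
  assumes "u + 1 < p"
  shows "(u * repunit p (Suc k) + 1) - (u * repunit p (Suc k) + 1) div p = u * p^k + 1"
proof -
  have div_eq: "(p * a + r) div p = a" if "r < p" for a r using that by simp
  have "u * repunit p (Suc k) + 1 = p * (u * repunit p k) + (u + 1)" by (simp add: repunit_Suc algebra_simps)
  then have "(u * repunit p (Suc k) + 1) div p = u * repunit p k" using div_eq[OF assms] by simp
  moreover have "u * repunit p (Suc k) = u * repunit p k + u * p^k" by (simp add: repunit_Suc' algebra_simps)
  ultimately show ?thesis by simp
qed

lemma sum_lessThan_add:
  fixes m a :: nat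
  shows "(\<Sum>x<m + a. g x) = (\<Sum>x<m. g x) + (\<Sum>x<a. g (m + x) :: 'a :: comm_monoid_add)"
  by (induction a) (simp_all add: add.assoc)

lemma sum_lessThan_mult:
  fixes a b :: nat
  shows "(\<Sum>t<a. \<Sum>T<b. g (t + a * T)) = (\<Sum>x<a * b. g x :: 'a :: comm_monoid_add)"
proof (induction b)
  case (Suc b)
  have "(\<Sum>t<a. \<Sum>T<Suc b. g (t + a * T)) = (\<Sum>t<a. (\<Sum>T<b. g (t + a * T)) + g (a * b + t))"
    by (simp add: add.commute)
  also have "\<dots> = (\<Sum>x<a * b. g x) + (\<Sum>t<a. g (a * b + t))" using Suc by (simp add: sum.distrib)
  also have "\<dots> = (\<Sum>x<a * b + a. g x)" by (simp add: sum_lessThan_add)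
  finally show ?case by (simp add: add.commute)
qed simp

lemma sum_lessThan_step:
  fixes A B x y z :: nat
  shows "(\<Sum>T<A + Suc B. if T < A then x else if T = A then y else z) = A * x + y + B * z"
  by (simp only: sum_lessThan_add sum.lessThan_Suc_shift) simp

lemma mult_add_less_add_mult_iff:
  fixes P A B r T :: nat
  assumes "B < P" "r < P"
  shows "P * A + B < r + P * T \<longleftrightarrow> A < T \<or> A = T \<and> B < r"
proof -
  consider "A < T" | "A = T" | "T < A" by linarith
  then show ?thesis
  proof cases
    case 1
    then have "P * (A + 1) \<le> P * T" by (intro mult_le_mono2) simp
    then show ?thesis using 1 assms(1) by (simp add: algebra_simps)
  next
    case 3
    then have "P * (T + 1) \<le> P * A" by (intro mult_le_mono2) simp
    then show ?thesis using 3 assms(2) by (simp add: algebra_simps)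
  qed simp
qed

lemma power_split: "j \<le> i \<Longrightarrow> (x :: 'a :: monoid_mult)^i = x^j * x^(i - j)"
  by (simp add: power_add[symmetric])

lemma sum_power_atLeastAtMost:
  assumes "a \<le> b"
  shows "(\<Sum>i=a..b. (of_nat p :: 'a :: comm_semiring_1)^i) = of_nat (p^a * repunit p (Suc b - a))"
proof -
  have "(\<Sum>i=a..b. (of_nat p :: 'a)^i) = (\<Sum>i=0..b - a. of_nat p^(a + i))"
    by (subst sum.atLeastAtMost_shift_0) (use assms in \<open>auto simp: comp_def\<close>)
  also have "\<dots> = (\<Sum>i<Suc b - a. of_nat p^a * of_nat p^i)"
    using assms by (intro sum.cong) (auto simp: power_add atLeast0AtMost lessThan_Suc_atMost[symmetric] Suc_diff_le)
  finally show ?thesis unfolding repunit_def by (simp add: sum_distrib_left)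
qed

definition fib_c :: "nat \<Rightarrow> nat \<Rightarrow> nat \<Rightarrow> real" where
  "fib_c p k s = real p ^ (s - 2 - k) * (real p - 1) / 2"

definition fib_A :: "nat \<Rightarrow> nat \<Rightarrow> nat \<Rightarrow> real" where
  "fib_A p k s = 2 * (real s - 1) * real p ^ (k + 1) - 2 * (real s - real k) + 3"

locale odd_base =
  fixes p n :: nat
  assumes p_eq: "p = 2 * n + 1" and n_pos: "0 < n"
begin

lemma p_ge_3: "3 \<le> p" and p_pos: "0 < p"
  using p_eq n_pos by simp_all

lemma repunit_pow: "2 * n * repunit p m + 1 = p^m"
proof (induction m)
  case (Suc m)
  have "2 * n * repunit p (Suc m) + 1 = p * (2 * n * repunit p m + 1)"
    unfolding repunit_Suc p_eq by (simp add: algebra_simps)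
  then show ?case by (simp only: Suc.IH power_Suc)
qed simp

lemma repunit_mult_less: "a \<le> 2 * n \<Longrightarrow> a * repunit p m < p^m"
  using mult_le_mono1[of a "2 * n" "repunit p m"] repunit_pow[of m] by linarith

text \<open>The map \<open>y \<mapsto> y - y div p\<close> is monotone and sends the multiples \<open>u * repunit p (k + 1)\<close> to
  \<open>u * p\<^sup>k\<close>, which locates its threshold crossings exactly.\<close>
lemma less_diff_div_iff:
  assumes "u < p" "y < p^(Suc k)"
  shows "p^k * u < y - y div p \<longleftrightarrow> u * repunit p (Suc k) < y"
proof
  assume H: "p^k * u < y - y div p"
  show "u * repunit p (Suc k) < y"
  proof (rule ccontr)
    assume "\<not> u * repunit p (Suc k) < y"
    then have "y - y div p \<le> u * repunit p (Suc k) - u * repunit p (Suc k) div p" by (intro diff_div_mono) simp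
    then show False using H repunit_diff_div[OF assms(1), of k] by (simp add: mult.commute)
  qed
next
  assume H: "u * repunit p (Suc k) < y"
  have "u + 1 < p"
  proof (rule ccontr)
    assume "\<not> u + 1 < p"
    then have "u = 2 * n" using assms(1) p_eq by simp
    then have "u * repunit p (Suc k) + 1 = p^(Suc k)" using repunit_pow[of "Suc k"] by simp
    then show False using H assms(2) by simp
  qed
  then show "p^k * u < y - y div p"
    using diff_div_mono[of "u * repunit p (Suc k) + 1" y p] H repunit_Suc_diff_div[of u p k]
    by (simp add: mult.commute)
qed

lemma diff_div_le:
  assumes "y < p^(Suc k)"
  shows "y - y div p \<le> p^k * (p - 1)"
proof -
  have "y \<le> 2 * n * repunit p (Suc k)" using assms repunit_pow[of "Suc k"] by linarith
  then have "y - y div p \<le> 2 * n * repunit p (Suc k) - 2 * n * repunit p (Suc k) div p"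
    by (rule diff_div_mono)
  also have "\<dots> = p^k * (p - 1)" using repunit_diff_div[of "2 * n" p k] p_eq by (simp add: mult.commute)
  finally show ?thesis .
qed

definition count_below :: "nat \<Rightarrow> nat \<Rightarrow> nat" where
  "count_below m y = card {u. u < p \<and> u * repunit p m < y}"

lemma card_descents_V_W:
  assumes "y < p^(Suc k)"
  shows "card {t. t < p \<and> block_descent (block_V p k t) (block_W p k y)} = count_below (Suc k) y"
proof -
  have iff: "block_descent (block_V p k t) (block_W p k y) \<longleftrightarrow> (p - 1 - t) * repunit p (Suc k) < y"
    if "t < p" for t
  proof -
    define x where "x = y - y div p"
    have "p^k * (p - 1 - t) = p^k * (p - 1) - p^k * t" by (simp add: diff_mult_distrib2)
    moreover have "p^k * t \<le> p^k * (p - 1)" using that by simp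
    moreover have "x \<le> p^k * (p - 1)" using diff_div_le[OF assms] unfolding x_def .
    ultimately have "block_descent (block_V p k t) (block_W p k y) \<longleftrightarrow> p^k * (p - 1 - t) < x"
      unfolding block_descent_def block_V_def block_W_def x_def[symmetric] by auto
    also have "\<dots> \<longleftrightarrow> (p - 1 - t) * repunit p (Suc k) < y"
      unfolding x_def using assms p_pos by (intro less_diff_div_iff) auto
    finally show ?thesis .
  qed
  have "{t. t < p \<and> block_descent (block_V p k t) (block_W p k y)}
      = (\<lambda>u. p - 1 - u) ` {u. u < p \<and> u * repunit p (Suc k) < y}"
  proof (rule set_eqI, rule iffI)
    fix t assume "t \<in> {t. t < p \<and> block_descent (block_V p k t) (block_W p k y)}"
    then show "t \<in> (\<lambda>u. p - 1 - u) ` {u. u < p \<and> u * repunit p (Suc k) < y}"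
      using iff by (intro image_eqI[of _ _ "p - 1 - t"]) auto
  next
    fix t assume "t \<in> (\<lambda>u. p - 1 - u) ` {u. u < p \<and> u * repunit p (Suc k) < y}"
    then obtain u where "u < p" "u * repunit p (Suc k) < y" "t = p - 1 - u" by auto
    then show "t \<in> {t. t < p \<and> block_descent (block_V p k t) (block_W p k y)}" using iff[of t] p_pos by auto
  qed
  moreover have "inj_on (\<lambda>u. p - 1 - u) {u. u < p \<and> u * repunit p (Suc k) < y}" by (rule inj_onI) auto
  ultimately show ?thesis unfolding count_below_def by (simp add: card_image)
qed

text \<open>The two inequalities of this descent amount to \<open>\<psi> y < p\<^sup>k (p - 1)\<close> for the monotone
  \<open>\<psi> z = (z - z div p) + p\<^sup>k (z div p\<^sup>k)\<close>; the threshold \<open>y\<^sub>0 = n * repunit p (k + 1) = (p\<^sup>k\<^sup>+\<^sup>1 - 1) / 2\<close>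
  satisfies \<open>\<psi> y\<^sub>0 = p\<^sup>k (p - 1)\<close> and \<open>\<psi> (y\<^sub>0 - 1) = p\<^sup>k (p - 1) - 1\<close>.\<close>
lemma descent_W_V_iff:
  assumes "0 < k" "l < p^k" "t < p"
  shows "block_descent (block_W p k (l + p^k * t)) (block_V p k t) \<longleftrightarrow> 2 * (l + p^k * t) + 1 < p^(Suc k)"
proof -
  define q where "q = p^k"
  define y where "y = l + q * t"
  define \<psi> where "\<psi> z = (z - z div p) + q * (z div q)" for z
  have q0: "0 < q" unfolding q_def using p_pos by simp
  have mono: "\<psi> a \<le> \<psi> b" if "a \<le> b" for a b
    unfolding \<psi>_def using diff_div_mono[OF that] div_le_mono[OF that, of q] by (intro add_mono) simp_all
  have "y div q = t" unfolding y_def using assms(2) q0 q_def by simp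
  moreover have "q * (p - 1 - t) = q * (p - 1) - q * t" by (simp add: diff_mult_distrib2)
  ultimately have "block_descent (block_W p k y) (block_V p k t) \<longleftrightarrow>
      q * t < q * (p - 1) - (y - y div p) \<and> y - y div p < q * (p - 1) - q * t"
    unfolding block_descent_def block_V_def block_W_def q_def by simp
  also have "\<dots> \<longleftrightarrow> \<psi> y < q * (p - 1)"
    unfolding \<psi>_def \<open>y div q = t\<close> by linarith
  finally have desc: "block_descent (block_W p k y) (block_V p k t) \<longleftrightarrow> \<psi> y < q * (p - 1)" .
  define y0 where "y0 = n * repunit p (Suc k)"
  have y0: "2 * y0 + 1 = p^(Suc k)" unfolding y0_def using repunit_pow[of "Suc k"] by simp
  have r: "n * repunit p k < q" "0 < n * repunit p k"
    unfolding q_def using repunit_mult_less[of n k] repunit_pos[OF assms(1)] n_pos by auto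
  have y0q: "y0 = q * n + n * repunit p k" unfolding y0_def q_def by (simp add: repunit_Suc' algebra_simps)
  have y0p: "y0 = p * (n * repunit p k) + n" unfolding y0_def by (simp add: repunit_Suc algebra_simps)
  have pm: "p - 1 = 2 * n" "n < p" using p_eq by auto
  have "y0 div q = n" unfolding y0q using r(1) by simp
  moreover have "y0 - y0 div p = q * n" using repunit_diff_div[of n p k] pm unfolding y0_def q_def by (simp add: mult.commute)
  ultimately have psi_y0: "\<psi> y0 = q * (p - 1)" unfolding \<psi>_def pm by simp
  have div_eq: "(d * a + r) div d = a" if "r < d" for a r d :: nat using that by simp
  have "y0 - 1 = q * n + (n * repunit p k - 1)" using y0q r by simp
  then have "(y0 - 1) div q = n" using r by (simp only:) (rule div_eq, linarith)
  moreover have "y0 - 1 = p * (n * repunit p k) + (n - 1)" using y0p n_pos by simp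
  then have "(y0 - 1) div p = n * repunit p k" using pm by (simp only:) (rule div_eq, linarith)
  moreover have "0 < q * n" using q0 n_pos by simp
  ultimately have psi_y0': "\<psi> (y0 - 1) = q * (p - 1) - 1" unfolding \<psi>_def pm using y0q r by simp
  have "\<psi> y < q * (p - 1) \<longleftrightarrow> 2 * y + 1 < p^(Suc k)"
  proof
    assume "\<psi> y < q * (p - 1)"
    then show "2 * y + 1 < p^(Suc k)" using mono[of y0 y] psi_y0 y0 by linarith
  next
    assume "2 * y + 1 < p^(Suc k)"
    then have "\<psi> y \<le> q * (p - 1) - 1" using mono[of y "y0 - 1"] psi_y0' y0 by linarith
    moreover have "0 < q * (p - 1)" using q0 p_ge_3 by simp
    ultimately show "\<psi> y < q * (p - 1)" by linarith
  qed
  then show ?thesis using desc unfolding y_def q_def by simp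
qed

section \<open>Unrolling the recursion\<close>

definition WV_descent :: "nat \<Rightarrow> nat \<Rightarrow> nat" where
  "WV_descent k y = (if 2 * y + 1 < p^(Suc k) then 1 else 0)"

text \<open>The labels \<open>(l + p\<^sup>k T) div p\<^sup>j\<close>, \<open>T < p\<^sup>j\<^sup>+\<^sup>1\<close>, are those of the W-vertices \<open>j\<close> double
  floors below \<open>V(s, l)\<close>, each listed as often as it occurs in the unrolled recursion.\<close>
definition ancestor_sum :: "nat \<Rightarrow> nat \<Rightarrow> (nat \<Rightarrow> nat) \<Rightarrow> nat \<Rightarrow> nat" where
  "ancestor_sum k j F l = (\<Sum>T<p^(Suc j). F ((l + p^k * T) div p^j))"

lemma fibM_V1_eq: "l < p^k \<Longrightarrow> fibM p k (Vv 1 l) = n"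
proof -
  assume "l < p^k"
  then have "fibM p k (Vv 1 l) = card {t. t \<le> p - 2 \<and> 2 * t < p - 1}" using fibM_V1 p_ge_3 by simp
  also have "{t. t \<le> p - 2 \<and> 2 * t < p - 1} = {..<n}" using p_eq n_pos by auto
  finally show ?thesis by simp
qed

lemma fibM_V_rec_ancestor_sum:
  assumes "2 \<le> s" "0 < k" "l < p^k"
  shows "fibM p k (Vv s l) = (\<Sum>t<p. fibM p k (Vv (s - 1) ((l + p^k * t) div p)))
     + (p - 1) * p^(s - 2) * ancestor_sum k 0 (WV_descent k) l
     + (if 3 \<le> s then (p - 1) * p^(s - 3) * ancestor_sum k 0 (count_below (Suc k)) l else 0)"
proof -
  have "card {t. t < p \<and> block_descent (block_W p k (l + p^k * t)) (block_V p k t)}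
      = ancestor_sum k 0 (WV_descent k) l"
    unfolding ancestor_sum_def WV_descent_def card_lessThan_filter
    by (simp add: descent_W_V_iff[OF assms(2,3)] cong: sum.cong_simp)
  moreover have "(\<Sum>t<p. card {t'. t' < p \<and> block_descent (block_V p k t') (block_W p k (l + p^k * t))})
      = ancestor_sum k 0 (count_below (Suc k)) l"
    unfolding ancestor_sum_def using card_descents_V_W[OF W_label_less[OF assms(3), unfolded Suc_eq_plus1[symmetric]]] by simp
  ultimately show ?thesis using fibM_V_rec[OF _ assms(1,3)] p_ge_3 by simp
qed

lemma sum_ancestor_sum_parent:
  assumes "l < p^k"
  shows "(\<Sum>t<p. ancestor_sum k j F ((l + p^k * t) div p)) = ancestor_sum k (Suc j) F l"
proof -
  have "((l + p^k * t) div p + p^k * T) div p^j = (l + p^k * (t + p * T)) div p^(Suc j)" for t T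
  proof -
    have "(l + p^k * t) div p + p^k * T = (l + p^k * t + p * (p^k * T)) div p" using p_pos by simp
    then show ?thesis by (simp add: div_mult2_eq algebra_simps)
  qed
  then have "(\<Sum>t<p. ancestor_sum k j F ((l + p^k * t) div p))
      = (\<Sum>t<p. \<Sum>T<p^(Suc j). F ((l + p^k * (t + p * T)) div p^(Suc j)))"
    unfolding ancestor_sum_def by simp
  also have "\<dots> = (\<Sum>x<p * p^(Suc j). F ((l + p^k * x) div p^(Suc j)))" by (rule sum_lessThan_mult)
  finally show ?thesis unfolding ancestor_sum_def by simp
qed

lemma fibM_V_unfold:
  assumes "0 < k" "l < p^k"
  shows "fibM p k (Vv (Suc m) l) = n * p^m
      + (\<Sum>j<m. (p - 1) * p^(m - 1 - j) * ancestor_sum k j (WV_descent k) l)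
      + (\<Sum>j<m - 1. (p - 1) * p^(m - 2 - j) * ancestor_sum k j (count_below (Suc k)) l)"
  using assms(2)
proof (induction m arbitrary: l)
  case 0
  then show ?case using fibM_V1_eq by simp
next
  case (Suc m)
  let ?F = "WV_descent k" and ?G = "count_below (Suc k)"
  have "(\<Sum>t<p. fibM p k (Vv (Suc m) ((l + p^k * t) div p))) = (\<Sum>t<p. n * p^m
      + (\<Sum>j<m. (p - 1) * p^(m - 1 - j) * ancestor_sum k j ?F ((l + p^k * t) div p))
      + (\<Sum>j<m - 1. (p - 1) * p^(m - 2 - j) * ancestor_sum k j ?G ((l + p^k * t) div p)))"
    using Suc.IH[OF parent_label_less[OF Suc.prems]] by (intro sum.cong) auto
  also have "\<dots> = n * p^(Suc m) + (\<Sum>j<m. (p - 1) * p^(m - 1 - j) * ancestor_sum k (Suc j) ?F l)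
      + (\<Sum>j<m - 1. (p - 1) * p^(m - 2 - j) * ancestor_sum k (Suc j) ?G l)"
  proof -
    have "(\<Sum>t<p. \<Sum>j<M. c j * ancestor_sum k j H ((l + p^k * t) div p))
        = (\<Sum>j<M. c j * ancestor_sum k (Suc j) H l)" for M c H
      by (subst sum.swap) (simp add: sum_distrib_left[symmetric] sum_ancestor_sum_parent[OF Suc.prems])
    then show ?thesis by (simp add: sum.distrib)
  qed
  finally have parents: "(\<Sum>t<p. fibM p k (Vv (Suc m) ((l + p^k * t) div p))) = \<dots>" .
  have F: "(\<Sum>j<Suc m. (p - 1) * p^(Suc m - 1 - j) * ancestor_sum k j ?F l)
      = (p - 1) * p^m * ancestor_sum k 0 ?F l + (\<Sum>j<m. (p - 1) * p^(m - 1 - j) * ancestor_sum k (Suc j) ?F l)"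
    by (subst sum.lessThan_Suc_shift) simp
  have G: "(\<Sum>j<Suc m - 1. (p - 1) * p^(Suc m - 2 - j) * ancestor_sum k j ?G l)
      = (if 1 \<le> m then (p - 1) * p^(m - 1) * ancestor_sum k 0 ?G l else 0)
        + (\<Sum>j<m - 1. (p - 1) * p^(m - 2 - j) * ancestor_sum k (Suc j) ?G l)"
  proof (cases m)
    case (Suc m')
    then have "Suc m - 1 = Suc m'" "m - 1 = m'" by simp_all
    then show ?thesis by (simp only:) (subst sum.lessThan_Suc_shift, simp add: Suc)
  qed simp
  have "fibM p k (Vv (Suc (Suc m)) l) = (\<Sum>t<p. fibM p k (Vv (Suc m) ((l + p^k * t) div p)))
      + (p - 1) * p^m * ancestor_sum k 0 ?F l
      + (if 1 \<le> m then (p - 1) * p^(m - 1) * ancestor_sum k 0 ?G l else 0)"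
    using fibM_V_rec_ancestor_sum[of "Suc (Suc m)", OF _ assms(1) Suc.prems]
    by (simp add: numeral_3_eq_3 Suc_le_eq)
  then show ?case unfolding parents F G by simp
qed

lemma ancestor_sum_low:
  assumes "j < k" "l < p^k"
  shows "ancestor_sum k j F l = (\<Sum>T<p^(Suc j). F (l div p^j + p^(k - j) * T))"
proof -
  have "p^k = p^j * p^(k - j)" using assms(1) by (simp add: power_add[symmetric])
  then have "(l + p^k * T) div p^j = l div p^j + p^(k - j) * T" for T using p_pos by (simp add: mult.assoc)
  then show ?thesis unfolding ancestor_sum_def by simp
qed

lemma ancestor_sum_high:
  assumes "k \<le> j" "l < p^k"
  shows "ancestor_sum k j F l = p^(j - k) * (\<Sum>y<p^(Suc k). F y)"
proof -
  have "p^j = p^k * p^(j - k)" using assms(1) by (simp add: power_add[symmetric])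
  moreover have "(l + p^k * T) div p^k = T" for T using assms(2) p_pos by simp
  ultimately have div: "(l + p^k * T) div p^j = T div p^(j - k)" for T by (simp add: div_mult2_eq)
  have "p^(Suc j) = p^(j - k) * p^(Suc k)" using assms(1) by (simp add: power_add[symmetric])
  then have "ancestor_sum k j F l = (\<Sum>x<p^(j - k) * p^(Suc k). F (x div p^(j - k)))"
    unfolding ancestor_sum_def div by (simp only:)
  also have "\<dots> = (\<Sum>t<p^(j - k). \<Sum>T<p^(Suc k). F ((t + p^(j - k) * T) div p^(j - k)))"
    by (rule sum_lessThan_mult[symmetric])
  also have "\<dots> = (\<Sum>t<p^(j - k). \<Sum>T<p^(Suc k). F T)" using p_pos by (intro sum.cong refl) simp
  finally show ?thesis by simp
qed

text \<open>In the progression \<open>r + p\<^sup>m T\<close>, \<open>T < p\<^sup>e\<close>, with \<open>m + e = k + 1\<close>, the threshold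
  \<open>(p\<^sup>k\<^sup>+\<^sup>1 - 1) / 2 = p\<^sup>m N + (p\<^sup>m - 1) / 2\<close>, \<open>N = n * repunit p e\<close>, is crossed at \<open>T = N\<close>.\<close>
lemma sum_WV_descent_progression:
  assumes "m + e = Suc k" "r < p^m"
  shows "(\<Sum>T<p^e. WV_descent k (r + p^m * T)) = n * repunit p e + (if 2 * r + 1 < p^m then 1 else 0)"
proof -
  define N where "N = n * repunit p e"
  define P where "P = p^m"
  have Q: "p^e = N + Suc N" unfolding N_def using repunit_pow[of e] by simp
  have PQ: "p^(Suc k) = 2 * (P * N) + P"
    unfolding P_def N_def assms(1)[symmetric] power_add repunit_pow[of e, symmetric] by (simp add: algebra_simps)
  have "WV_descent k (r + P * T) = (if T < N then 1 else if T = N then (if 2 * r + 1 < P then 1 else 0) else 0)" for T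
  proof -
    consider "T < N" | "T = N" | "N < T" by linarith
    then show ?thesis
    proof cases
      case 1
      then have "P * (T + 1) \<le> P * N" by (intro mult_le_mono2) simp
      then show ?thesis using 1 assms(2) unfolding WV_descent_def PQ P_def[symmetric] by (simp add: algebra_simps)
    next
      case 3
      then have "P * (N + 1) \<le> P * T" by (intro mult_le_mono2) simp
      then show ?thesis using 3 unfolding WV_descent_def PQ by (simp add: algebra_simps)
    qed (unfold WV_descent_def PQ, simp add: algebra_simps)
  qed
  then have "(\<Sum>T<p^e. WV_descent k (r + p^m * T))
      = (\<Sum>T<N + Suc N. if T < N then 1 else if T = N then (if 2 * r + 1 < P then 1 else 0) else 0)"
    unfolding Q P_def by simp
  then show ?thesis unfolding sum_lessThan_step N_def P_def by simp
qed

lemma sum_count_below_progression: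
  assumes "m + e = Suc k" "r < p^m"
  shows "(\<Sum>T<p^e. count_below (Suc k) (r + p^m * T)) = p * n * repunit p e + count_below m r"
proof -
  define P where "P = p^m"
  have single: "(\<Sum>T<p^e. if a * repunit p (Suc k) < r + P * T then 1 else 0)
      = (2 * n - a) * repunit p e + (if a * repunit p m < r then 1 else 0 :: nat)" if a: "a < p" for a
  proof -
    define A where "A = a * repunit p e"
    define B where "B = a * repunit p m"
    have a2: "a \<le> 2 * n" using a p_eq by simp
    have "a * repunit p (Suc k) = P * A + B"
      unfolding A_def B_def P_def assms(1)[symmetric] add.commute[of m e] repunit_add by (simp add: algebra_simps)
    moreover have "B < P" unfolding B_def P_def using repunit_mult_less[OF a2] .
    ultimately have "(if a * repunit p (Suc k) < r + P * T then 1 else 0)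
        = (if T < A then 0 else if T = A then (if B < r then 1 else 0) else 1 :: nat)" for T
      using mult_add_less_add_mult_iff[of B P r A T] assms(2) unfolding P_def by auto
    moreover have "p^e = A + Suc ((2 * n - a) * repunit p e)"
      unfolding A_def using repunit_pow[of e] a2 by (simp add: diff_mult_distrib)
    ultimately have "(\<Sum>T<p^e. if a * repunit p (Suc k) < r + P * T then 1 else 0)
        = (\<Sum>T<A + Suc ((2 * n - a) * repunit p e). if T < A then 0 else if T = A then (if B < r then 1 else 0) else 1 :: nat)"
      by (simp only:)
    then show ?thesis unfolding sum_lessThan_step B_def by simp
  qed
  have "(\<Sum>a<p. 2 * n - a) = (\<Sum>a<p. a)"
    using sum.nat_diff_reindex[of "\<lambda>a. a" p] p_eq by simp
  also have "\<dots> = p * n"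
    using double_gauss_sum[of "2 * n", where 'a = nat] p_eq by (simp add: lessThan_Suc_atMost[symmetric] atLeast0AtMost)
  finally have gauss: "(\<Sum>a<p. 2 * n - a) = p * n" .
  have "(\<Sum>T<p^e. count_below (Suc k) (r + p^m * T))
      = (\<Sum>a<p. \<Sum>T<p^e. if a * repunit p (Suc k) < r + P * T then 1 else 0)"
    unfolding count_below_def card_lessThan_filter P_def by (rule sum.swap)
  also have "\<dots> = (\<Sum>a<p. (2 * n - a) * repunit p e + (if a * repunit p m < r then 1 else 0))"
    using single by (intro sum.cong) auto
  also have "\<dots> = p * n * repunit p e + count_below m r"
    unfolding count_below_def card_lessThan_filter gauss[symmetric] by (simp add: sum.distrib sum_distrib_right)
  finally show ?thesis .
qed

definition lower_half :: "nat \<Rightarrow> nat \<Rightarrow> nat \<Rightarrow> nat" where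
  "lower_half k j l = (if 2 * (l div p^j) + 1 < p^(k - j) then 1 else 0)"

lemma div_pow_less: "j \<le> k \<Longrightarrow> l < p^k \<Longrightarrow> l div p^j < p^(k - j)"
  using p_pos by (simp add: div_less_iff_less_mult power_add[symmetric])

lemma ancestor_sum_WV_descent_low:
  "j < k \<Longrightarrow> l < p^k \<Longrightarrow> ancestor_sum k j (WV_descent k) l = n * repunit p (Suc j) + lower_half k j l"
  using ancestor_sum_low sum_WV_descent_progression[of "k - j" "Suc j" k "l div p^j"] div_pow_less[of j k l]
  unfolding lower_half_def by simp

lemma ancestor_sum_count_below_low:
  "j < k \<Longrightarrow> l < p^k \<Longrightarrow>
    ancestor_sum k j (count_below (Suc k)) l = p * n * repunit p (Suc j) + count_below (k - j) (l div p^j)"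
  using ancestor_sum_low sum_count_below_progression[of "k - j" "Suc j" k "l div p^j"] div_pow_less[of j k l]
  by simp

lemma ancestor_sum_WV_descent_high:
  "k \<le> j \<Longrightarrow> l < p^k \<Longrightarrow> ancestor_sum k j (WV_descent k) l = p^(j - k) * (n * repunit p (Suc k))"
  using ancestor_sum_high sum_WV_descent_progression[of 0 "Suc k" k 0] by simp

lemma ancestor_sum_count_below_high:
  "k \<le> j \<Longrightarrow> l < p^k \<Longrightarrow>
    ancestor_sum k j (count_below (Suc k)) l = p^(j - k) * (p * n * repunit p (Suc k))"
  using ancestor_sum_high sum_count_below_progression[of 0 "Suc k" k 0] by (simp add: count_below_def)

definition digit_term :: "nat \<Rightarrow> nat \<Rightarrow> nat \<Rightarrow> nat" where
  "digit_term k j l = p * lower_half k j l + count_below (k - j) (l div p^j)"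

definition digit_weight :: "nat \<Rightarrow> nat \<Rightarrow> nat" where
  "digit_weight k l = (\<Sum>j<k. p^(k - 1 - j) * digit_term k j l)"

lemma fibM_V_closed_form:
  assumes "0 < k" "l < p^k"
  shows "fibM p k (Vv (e + k + 2) l) = n * p^e * (p^(k+1)
    + 2 * (\<Sum>j<k. p^(k - j) * (2 * n * repunit p (Suc j))) + 2 * digit_weight k l
    + (2 * e + 1) * (2 * n * repunit p (Suc k)))"
proof -
  define M where "M = e + k + 1"
  have pm: "p - 1 = 2 * n" using p_eq by simp
  define f where "f j = (p - 1) * p^(M - 1 - j) * ancestor_sum k j (WV_descent k) l" for j
  define g where "g j = (p - 1) * p^(M - 2 - j) * ancestor_sum k j (count_below (Suc k)) l" for j
  have unfold: "fibM p k (Vv (e + k + 2) l) = n * p^M + (\<Sum>j<M. f j) + (\<Sum>j<M - 1. g j)"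
    using fibM_V_unfold[OF assms, of M] unfolding M_def f_def g_def by (simp add: numeral_2_eq_2)
  have "M = k + (e + 1)" "M - 1 = k + e" unfolding M_def by simp_all
  then have split: "(\<Sum>j<M. f j) = (\<Sum>j<k. f j) + (\<Sum>i<e + 1. f (k + i))"
      "(\<Sum>j<M - 1. g j) = (\<Sum>j<k. g j) + (\<Sum>i<e. g (k + i))"
    by (simp_all only: sum_lessThan_add)
  have high_f: "f (k + i) = 2 * n * p^e * (n * repunit p (Suc k))" if "i < e + 1" for i
  proof -
    have "p^(M - 1 - (k + i)) * p^(k + i - k) = p^e" unfolding M_def using that by (simp add: power_add[symmetric])
    then show ?thesis unfolding f_def pm
      by (simp add: ancestor_sum_WV_descent_high[OF _ assms(2)] mult.assoc mult.left_commute[of "p^(M - 1 - (k + i))"])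
  qed
  have high_g: "g (k + i) = 2 * n * p^e * (n * repunit p (Suc k))" if "i < e" for i
  proof -
    have "p^(e - Suc i) * (p^i * p) = p^(e - Suc i + Suc i)" by (simp add: power_add)
    also have "e - Suc i + Suc i = e" using that by simp
    finally have "p^(M - 2 - (k + i)) * (p^(k + i - k) * p) = p^e" unfolding M_def by simp
    then show ?thesis unfolding g_def pm
      by (simp add: ancestor_sum_count_below_high[OF _ assms(2)] mult.assoc mult.left_commute[of "p^(M - 2 - (k + i))"])
  qed
  have low: "f j + g j = n * p^e * (2 * (p^(k - j) * (2 * n * repunit p (Suc j))) + 2 * (p^(k - 1 - j) * digit_term k j l))"
    if "j < k" for j
  proof -
    have "p^(M - 1 - j) = p^e * p^(k - j)" "p^(M - 2 - j) = p^e * p^(k - 1 - j)"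
      unfolding M_def using that by (simp_all add: power_add[symmetric])
    moreover have "p^(k - j) = p * p^(k - 1 - j)" using that by (simp add: power_Suc[symmetric] Suc_diff_Suc)
    ultimately show ?thesis
      unfolding f_def g_def digit_term_def ancestor_sum_WV_descent_low[OF that assms(2)]
        ancestor_sum_count_below_low[OF that assms(2)] pm
      by (simp add: algebra_simps)
  qed
  have "(\<Sum>j<k. f j) + (\<Sum>j<k. g j) = (\<Sum>j<k. n * p^e * (2 * (p^(k - j) * (2 * n * repunit p (Suc j)))
      + 2 * (p^(k - 1 - j) * digit_term k j l)))"
    unfolding sum.distrib[symmetric] using low by (intro sum.cong) auto
  also have "\<dots> = n * p^e * (2 * (\<Sum>j<k. p^(k - j) * (2 * n * repunit p (Suc j))) + 2 * digit_weight k l)"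
    unfolding digit_weight_def by (simp only: sum_distrib_left[symmetric] sum.distrib)
  moreover have "(\<Sum>i<e + 1. f (k + i)) = (e + 1) * (2 * n * p^e * (n * repunit p (Suc k)))" using high_f by simp
  moreover have "(\<Sum>i<e. g (k + i)) = e * (2 * n * p^e * (n * repunit p (Suc k)))" using high_g by simp
  moreover have "p^M = p^e * p^(k+1)" unfolding M_def by (simp add: power_add[symmetric])
  ultimately show ?thesis unfolding unfold split by (simp add: algebra_simps)
qed

lemma sum_pow_repunit: "(\<Sum>j<k. p^(k - j) * (2 * n * repunit p (Suc j))) + p * repunit p k = k * p^(k+1)"
proof -
  have summand: "p^(k - j) * (2 * n * repunit p (Suc j)) + p^(k - j) = p^(k+1)" if "j < k" for j
  proof -
    have "p^(k - j) * (2 * n * repunit p (Suc j)) + p^(k - j) = p^(k - j) * (2 * n * repunit p (Suc j) + 1)"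
      by (simp add: algebra_simps)
    also have "\<dots> = p^(k - j) * p^(Suc j)" by (simp only: repunit_pow)
    also have "\<dots> = p^(k+1)" using that by (simp add: power_add[symmetric])
    finally show ?thesis .
  qed
  have shift: "(\<Sum>j<k. p^(k - j)) = p * repunit p k"
  proof -
    have "(\<Sum>j<k. p^(k - j)) = (\<Sum>j<k. p * p^(k - Suc j))"
      by (intro sum.cong) (auto simp: power_Suc[symmetric] Suc_diff_Suc)
    also have "\<dots> = p * repunit p k" unfolding repunit_def sum_distrib_left[symmetric] sum.nat_diff_reindex ..
    finally show ?thesis .
  qed
  have "(\<Sum>j<k. p^(k - j) * (2 * n * repunit p (Suc j))) + p * repunit p k
      = (\<Sum>j<k. p^(k - j) * (2 * n * repunit p (Suc j)) + p^(k - j))"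
    unfolding shift[symmetric] by (simp add: sum.distrib)
  also have "\<dots> = (\<Sum>j<k. p^(k+1))" using summand by (intro sum.cong) auto
  finally show ?thesis by simp
qed

lemma fibM_V_closed_form_real:
  assumes "0 < k" "l < p^k" "k + 2 < s"
  shows "real (fibM p k (Vv s l))
    = fib_c p k s * (fib_A p k s - 2 * real p * real (repunit p k) + 2 * real (digit_weight k l))"
proof -
  define e where "e = s - 2 - k"
  have s: "s = e + k + 2" unfolding e_def using assms(3) by simp
  have X: "real (\<Sum>j<k. p^(k - j) * (2 * n * repunit p (Suc j))) = real k * real p^(k+1) - real p * real (repunit p k)"
    using arg_cong[OF sum_pow_repunit[of k], of real] by simp
  have R: "real (2 * n * repunit p (Suc k)) = real p^(k+1) - 1"
    using arg_cong[OF repunit_pow[of "Suc k"], of real] by simp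
  have "real (fibM p k (Vv s l)) = real n * real p^e * (real p^(k+1)
      + 2 * real (\<Sum>j<k. p^(k - j) * (2 * n * repunit p (Suc j))) + 2 * real (digit_weight k l)
      + (2 * real e + 1) * real (2 * n * repunit p (Suc k)))"
    unfolding s fibM_V_closed_form[OF assms(1,2)] by (simp add: algebra_simps)
  also have "\<dots> = fib_c p k s * (fib_A p k s - 2 * real p * real (repunit p k) + 2 * real (digit_weight k l))"
    unfolding X R fib_c_def fib_A_def e_def[symmetric] s using p_eq by (simp add: algebra_simps)
  finally show ?thesis .
qed

section \<open>The digit weight on the five ranges of \<open>l\<close>\<close>

lemma sum_rev_power: "(\<Sum>j<N. p^(N - Suc j)) = repunit p N"
  unfolding repunit_def using sum.nat_diff_reindex[of "\<lambda>i. p^i" N] by simp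

lemma digit_weight_two_values:
  assumes "J \<le> k" "\<And>j. j < J \<Longrightarrow> digit_term k j l = \<alpha>" "\<And>j. J \<le> j \<Longrightarrow> j < k \<Longrightarrow> digit_term k j l = \<beta>"
  shows "digit_weight k l = \<alpha> * (p^(k - J) * repunit p J) + \<beta> * repunit p (k - J)"
proof -
  have "digit_weight k l = (\<Sum>j<J. p^(k - 1 - j) * digit_term k j l) + (\<Sum>i<k - J. p^(k - 1 - (J + i)) * digit_term k (J + i) l)"
    unfolding digit_weight_def using sum_lessThan_add[of _ J "k - J"] assms(1) by simp
  also have "(\<Sum>j<J. p^(k - 1 - j) * digit_term k j l) = (\<Sum>j<J. \<alpha> * (p^(k - J) * p^(J - 1 - j)))"
  proof (intro sum.cong refl)
    fix j assume j: "j \<in> {..<J}"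
    then have "k - 1 - j = (k - J) + (J - 1 - j)" using assms(1) by auto
    then have "p^(k - 1 - j) = p^(k - J) * p^(J - 1 - j)" by (metis power_add)
    then show "p^(k - 1 - j) * digit_term k j l = \<alpha> * (p^(k - J) * p^(J - 1 - j))"
      using assms(2) j by simp
  qed
  also have "\<dots> = \<alpha> * (p^(k - J) * repunit p J)" by (simp add: sum_distrib_left[symmetric] sum_rev_power)
  also have "(\<Sum>i<k - J. p^(k - 1 - (J + i)) * digit_term k (J + i) l) = (\<Sum>i<k - J. \<beta> * p^(k - J - Suc i))"
    using assms(3) by (intro sum.cong refl) (auto simp: algebra_simps)
  also have "\<dots> = \<beta> * repunit p (k - J)" unfolding sum_distrib_left[symmetric] sum_rev_power ..
  finally show ?thesis .
qed

lemma count_below_eq: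
  assumes "0 < m" "t \<le> p" "t = 0 \<or> (t - 1) * repunit p m < r" "r \<le> t * repunit p m"
  shows "count_below m r = t"
proof -
  have "{u. u < p \<and> u * repunit p m < r} = {..<t}"
  proof (rule set_eqI, rule iffI)
    fix u assume "u \<in> {u. u < p \<and> u * repunit p m < r}"
    then have "u * repunit p m < r" by simp
    then have "u * repunit p m < t * repunit p m" using assms(4) by linarith
    then show "u \<in> {..<t}" using repunit_pos[OF assms(1)] by (simp add: mult_less_cancel2)
  next
    fix u assume u: "u \<in> {..<t}"
    then have "u * repunit p m \<le> (t - 1) * repunit p m" by (intro mult_le_mono1) auto
    moreover have "(t - 1) * repunit p m < r" using u assms(3) by auto
    ultimately have "u * repunit p m < r" by linarith
    then show "u \<in> {u. u < p \<and> u * repunit p m < r}" using u assms(2) by simp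
  qed
  then show ?thesis unfolding count_below_def by simp
qed

lemma lower_half_eq: "j \<le> k \<Longrightarrow> lower_half k j l = (if l div p^j < n * repunit p (k - j) then 1 else 0)"
  unfolding lower_half_def using repunit_pow[of "k - j"] by simp

lemma le_div_pow: "p^j * L \<le> l \<Longrightarrow> L \<le> l div p^j"
  using p_pos by (simp add: less_eq_div_iff_mult_less_eq mult.commute)

lemma div_pow_le: "l < p^j * (H + 1) \<Longrightarrow> l div p^j \<le> H"
  using p_pos by (simp add: div_less_iff_less_mult less_Suc_eq_le[symmetric] mult.commute)

lemma digit_term_window:
  assumes "j < k" "t < p" "t = 0 \<or> (t - 1) * repunit p (k - j) < l div p^j" "l div p^j \<le> t * repunit p (k - j)"
    and "l div p^j = t * repunit p (k - j) \<Longrightarrow> t \<noteq> n"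
  shows "digit_term k j l = (if t \<le> n then p + t else t)"
proof -
  define r where "r = l div p^j"
  define R where "R = repunit p (k - j)"
  have R: "0 < R" unfolding R_def using repunit_pos assms(1) by simp
  have "r < n * R \<longleftrightarrow> t \<le> n"
  proof
    assume "r < n * R"
    show "t \<le> n"
    proof (rule ccontr)
      assume "\<not> t \<le> n"
      then have "n * R \<le> (t - 1) * R" by (intro mult_le_mono1) simp
      moreover have "(t - 1) * R < r" using assms(3) \<open>\<not> t \<le> n\<close> unfolding r_def R_def by auto
      ultimately show False using \<open>r < n * R\<close> by linarith
    qed
  next
    assume "t \<le> n"
    then have "r < t * R \<or> t < n" using assms(4,5) unfolding r_def R_def by fastforce
    then show "r < n * R"
    proof
      assume "r < t * R"
      then show ?thesis using mult_le_mono1[OF \<open>t \<le> n\<close>, of R] by linarith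
    next
      assume "t < n"
      then have "t * R < n * R" using R by simp
      then show ?thesis using assms(4) unfolding r_def R_def by linarith
    qed
  qed
  moreover have "count_below (k - j) r = t" unfolding r_def using assms(1-4) by (intro count_below_eq) auto
  ultimately show ?thesis
    unfolding digit_term_def lower_half_eq[OF less_imp_le[OF assms(1)]] r_def R_def by simp
qed

lemma digit_weight_zero: "0 < k \<Longrightarrow> digit_weight k 0 = p * repunit p k"
proof -
  assume "0 < k"
  have "digit_term k j 0 = p" if "j < k" for j
  proof -
    have "count_below (k - j) 0 = 0" by (rule count_below_eq) (use that in auto)
    moreover have "lower_half k j 0 = 1"
      using lower_half_eq[of j k 0] repunit_pos[of "k - j" p] that n_pos by simp
    ultimately show ?thesis unfolding digit_term_def by simp
  qed
  then show ?thesis using digit_weight_two_values[of k k 0 p] by simp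
qed

lemma digit_weight_half: "0 < k \<Longrightarrow> digit_weight k (n * repunit p k) = n * repunit p k"
proof -
  assume "0 < k"
  have "digit_term k j (n * repunit p k) = n" if j: "j < k" for j
  proof -
    have "n * repunit p k = p^j * (n * repunit p (k - j)) + n * repunit p j"
      using repunit_add[of p "k - j" j] j by (simp add: algebra_simps)
    then have r: "n * repunit p k div p^j = n * repunit p (k - j)"
      using repunit_mult_less[of n j] p_pos by simp
    have "count_below (k - j) (n * repunit p k div p^j) = n"
      unfolding r by (rule count_below_eq) (use j p_eq repunit_pos[of "k - j" p] in auto)
    moreover have "lower_half k j (n * repunit p k) = 0" using lower_half_eq[of j k] j r by simp
    ultimately show ?thesis unfolding digit_term_def by simp
  qed
  then show ?thesis using digit_weight_two_values[of k k "n * repunit p k" n] by simp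
qed

lemma digit_weight_case_c:
  assumes "0 < k" "1 \<le> t" "t < p" "t \<noteq> n" "t * p^(k - 1) \<le> l" "l \<le> t * repunit p k"
  shows "digit_weight k l = (if t \<le> n then p + t else t) * repunit p k"
proof -
  have t2: "t \<le> 2 * n" using assms(3) p_eq by simp
  have "digit_term k j l = (if t \<le> n then p + t else t)" if j: "j < k" for j
  proof -
    define m where "m = k - j"
    have m: "0 < m" "k = j + m" unfolding m_def using j by auto
    define m' where "m' = m - 1"
    have m': "m = Suc m'" unfolding m'_def using m by simp
    have "p^j * (t * p^m') = t * p^(k - 1)" unfolding m(2) m' by (simp add: power_add)
    then have lo: "t * p^m' \<le> l div p^j" using assms(5) by (metis le_div_pow)
    have "t * repunit p k = p^j * (t * repunit p m) + t * repunit p j"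
      unfolding m(2) using repunit_add[of p m j] by (simp add: algebra_simps)
    then have "l < p^j * (t * repunit p m + 1)" using assms(6) repunit_mult_less[OF t2, of j] by simp
    then have hi: "l div p^j \<le> t * repunit p m" by (rule div_pow_le)
    have "(t - 1) * repunit p m' < p^m'" using repunit_mult_less[of "t - 1" m'] t2 by simp
    moreover have "(t - 1) * repunit p m = (t - 1) * repunit p m' + (t - 1) * p^m'"
      unfolding m' repunit_Suc' by (simp add: algebra_simps)
    moreover have "t * p^m' = (t - 1) * p^m' + p^m'" using assms(2) by (simp add: algebra_simps)
    ultimately have "(t - 1) * repunit p m < l div p^j" using lo by linarith
    then show ?thesis using digit_term_window[OF j assms(3)] hi assms(4) unfolding m_def by blast
  qed
  then show ?thesis using digit_weight_two_values[of k k l] by simp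
qed

lemma digit_term_case_b_low:
  assumes "i + 2 \<le> k" "t = Suc c0" "t < p"
    "c0 * (p^i * repunit p (k - i)) + p^i \<le> l" "l < c0 * (p^(i + 1) * repunit p (k - i - 1)) + p^(i + 1)"
    and j: "j \<le> i"
  shows "digit_term k j l = (if t \<le> n then p + t else t)"
proof -
  define K where "K = k - i"
  have K: "2 \<le> K" "k - i - 1 = K - 1" unfolding K_def using assms(1) by auto
  have c0: "c0 \<le> 2 * n" using assms(2,3) p_eq by auto
  have lo_l: "c0 * (p^i * repunit p K) + p^i \<le> l" using assms(4) unfolding K_def .
  have hi_l: "l < c0 * (p^(i + 1) * repunit p (K - 1)) + p^(i + 1)" using assms(5) unfolding K(2) .
  have RK1: "0 < repunit p (K - 1)" using repunit_pos[of "K - 1"] K(1) by simp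
  define e where "e = i - j"
  define m where "m = k - j"
  have me: "m = K + e" "m = (K - 1) + Suc e" unfolding m_def e_def K_def using j assms(1) by auto
  have pi: "p^i = p^j * p^e" unfolding e_def using power_split[OF j, of p] .
  have pi1: "p^(i + 1) = p^j * p^(Suc e)" unfolding e_def using power_split[of j "i + 1" p] j by (simp add: Suc_diff_le)
  define L where "L = c0 * (p^e * repunit p K) + p^e"
  define Z where "Z = c0 * (p^(Suc e) * repunit p (K - 1)) + p^(Suc e)"
  have "1 \<le> p^(Suc e)" using p_pos by simp
  then have Z1: "1 \<le> Z" unfolding Z_def by linarith
  have "p^j * L \<le> l" using lo_l unfolding L_def pi by (simp add: algebra_simps)
  then have rl: "L \<le> l div p^j" by (rule le_div_pow)
  have "l < p^j * ((Z - 1) + 1)" using hi_l Z1 unfolding Z_def pi1 by (simp add: algebra_simps)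
  then have ru: "l div p^j \<le> Z - 1" by (rule div_pow_le)
  have Rm1: "repunit p m = repunit p K * p^e + repunit p e" unfolding me(1) repunit_add ..
  have Rm2: "repunit p m = repunit p (K - 1) * p^(Suc e) + repunit p (Suc e)" unfolding me(2) repunit_add ..
  have "c0 * repunit p e < p^e" using repunit_mult_less[OF c0] .
  then have cL: "c0 * repunit p m < L" unfolding Rm1 L_def by (simp add: algebra_simps)
  have "p^(Suc e) \<le> repunit p (K - 1) * p^(Suc e)" using RK1 by simp
  then have tZ: "Z \<le> t * (repunit p (K - 1) * p^(Suc e))" unfolding Z_def assms(2) by (simp add: algebra_simps)
  have "t * (repunit p (K - 1) * p^(Suc e)) \<le> t * repunit p m" unfolding Rm2 by (simp add: algebra_simps)
  then have "l div p^j < t * repunit p m" using tZ Z1 ru by linarith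
  then show ?thesis using digit_term_window[of j k t] cL rl j assms(1,2,3) unfolding m_def by fastforce
qed

lemma digit_term_case_b_high:
  assumes "i + 2 \<le> k" "t = Suc c0" "t < p"
    "c0 * (p^i * repunit p (k - i)) + p^i \<le> l" "l < c0 * (p^(i + 1) * repunit p (k - i - 1)) + p^(i + 1)"
    and j: "i + 1 \<le> j" "j < k"
  shows "digit_term k j l = (if t \<le> n then p else 0) + c0"
proof -
  define K where "K = k - i"
  have K: "2 \<le> K" "k - i - 1 = K - 1" "K = Suc (K - 1)" unfolding K_def using assms(1) by auto
  have c0: "c0 \<le> 2 * n" using assms(2,3) p_eq by auto
  have lo_l: "c0 * (p^i * repunit p K) + p^i \<le> l" using assms(4) unfolding K_def .
  have hi_l: "l < c0 * (p^(i + 1) * repunit p (K - 1)) + p^(i + 1)" using assms(5) unfolding K(2) .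
  define e where "e = j - (i + 1)"
  define m where "m = k - j"
  have me: "K - 1 = m + e" "0 < m" unfolding m_def e_def K_def using j by auto
  have pj: "p^j = p^(i + 1) * p^e" unfolding e_def using power_split[of "i + 1" j p] j by simp
  have RK: "repunit p K = p * (repunit p m * p^e + repunit p e) + 1"
    by (subst K(3), subst repunit_Suc, subst me(1), subst repunit_add) simp
  have "c0 * repunit p e + 1 \<le> p^e" using repunit_mult_less[OF c0, of e] by simp
  then have "p^(i + 1) * (c0 * repunit p e + 1) \<le> p^(i + 1) * p^e" by (rule mult_le_mono2)
  then have R: "c0 * (p^(i + 1) * repunit p e) + p^(i + 1) \<le> p^j" unfolding pj by (simp add: algebra_simps)
  have "p^j * (c0 * repunit p m) \<le> c0 * (p^i * repunit p K) + p^i" unfolding RK pj by (simp add: algebra_simps)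
  then have rl: "c0 * repunit p m \<le> l div p^j" using lo_l by (intro le_div_pow) linarith
  have RK1e: "repunit p (K - 1) = repunit p m * p^e + repunit p e" unfolding me(1) repunit_add ..
  have "c0 * (p^(i + 1) * repunit p (K - 1)) + p^(i + 1) \<le> p^j * (c0 * repunit p m + 1)"
    using R unfolding RK1e pj by (simp add: algebra_simps)
  then have ru: "l div p^j \<le> c0 * repunit p m" using hi_l by (intro div_pow_le) linarith
  have r: "l div p^j = c0 * repunit p m" using rl ru by simp
  have count: "count_below m (l div p^j) = c0"
    unfolding r by (rule count_below_eq[OF me(2)]) (use assms(2,3) repunit_pos[OF me(2)] in auto)
  have half: "lower_half k j l = (if t \<le> n then 1 else 0)"
    using lower_half_eq[of j k l] j r repunit_pos[OF me(2)] assms(2) unfolding m_def by auto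
  show ?thesis unfolding digit_term_def half m_def[symmetric] count by simp
qed

lemma digit_weight_case_b:
  assumes "i + 2 \<le> k" "t = Suc c0" "t < p"
    "c0 * (p^i * repunit p (k - i)) + p^i \<le> l" "l < c0 * (p^(i + 1) * repunit p (k - i - 1)) + p^(i + 1)"
  shows "digit_weight k l + repunit p (k - i - 1) = (if t \<le> n then p + t else t) * repunit p k"
proof -
  have "digit_weight k l = (if t \<le> n then p + t else t) * (p^(k - (i + 1)) * repunit p (i + 1))
      + ((if t \<le> n then p else 0) + c0) * repunit p (k - (i + 1))"
    using assms(1) digit_term_case_b_low[OF assms] digit_term_case_b_high[OF assms]
    by (intro digit_weight_two_values) auto
  moreover have "repunit p k = repunit p (i + 1) * p^(k - (i + 1)) + repunit p (k - (i + 1))"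
    using repunit_add[of p "i + 1" "k - (i + 1)"] assms(1) by simp
  ultimately show ?thesis using assms(2) by (cases "t \<le> n") (simp_all add: algebra_simps)
qed

lemma digit_term_case_d_low:
  assumes "1 \<le> i'" "i' + 1 \<le> k" "n * (p^i' * repunit p (k - i')) \<le> l" "l < n * (p^(i' - 1) * repunit p (k - i' + 1))"
    and j: "j < i'"
  shows "digit_term k j l = p + n"
proof -
  define e where "e = i' - j"
  define m where "m = k - j"
  have me: "m = (k - i') + e" "m = (k - i' + 1) + (e - 1)" unfolding m_def e_def using j assms(1,2) by auto
  have pi: "p^i' = p^j * p^e" unfolding e_def using power_split[of j i' p] j by simp
  have pi1: "p^(i' - 1) = p^j * p^(e - 1)" unfolding e_def using power_split[of j "i' - 1" p] j by (simp add: diff_diff_left)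
  have "p^j * (n * (p^e * repunit p (k - i'))) \<le> l" using assms(3) unfolding pi by (simp add: algebra_simps)
  then have rl: "n * (p^e * repunit p (k - i')) \<le> l div p^j" by (rule le_div_pow)
  have "l < n * (p^(e - 1) * repunit p (k - i' + 1)) * p^j" using assms(4) unfolding pi1 by (simp add: algebra_simps)
  then have ru: "l div p^j < n * (p^(e - 1) * repunit p (k - i' + 1))" using p_pos by (simp add: div_less_iff_less_mult)
  have Rm1: "repunit p m = repunit p (k - i') * p^e + repunit p e" unfolding me(1) repunit_add ..
  have Rm2: "repunit p m = repunit p (k - i' + 1) * p^(e - 1) + repunit p (e - 1)" unfolding me(2) repunit_add ..
  have "(n - 1) * repunit p e < p^e" using repunit_mult_less[of "n - 1" e] by simp
  moreover have "p^e \<le> p^e * repunit p (k - i')" using repunit_pos[of "k - i'" p] assms(2) by simp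
  moreover have "(n - 1) * repunit p m = (n - 1) * (p^e * repunit p (k - i')) + (n - 1) * repunit p e"
    unfolding Rm1 by (simp add: algebra_simps)
  moreover have "n * (p^e * repunit p (k - i')) = (n - 1) * (p^e * repunit p (k - i')) + p^e * repunit p (k - i')"
    using n_pos by (cases n) (auto simp: algebra_simps)
  ultimately have "(n - 1) * repunit p m < l div p^j" using rl by linarith
  moreover have "n * (p^(e - 1) * repunit p (k - i' + 1)) \<le> n * repunit p m" unfolding Rm2 by (simp add: algebra_simps)
  then have below: "l div p^j < n * repunit p m" using ru by linarith
  ultimately show ?thesis
    using digit_term_window[of j k n] j assms(2) p_eq unfolding m_def by fastforce
qed

lemma digit_term_case_d_high:
  assumes "1 \<le> i'" "i' + 1 \<le> k" "n * (p^i' * repunit p (k - i')) \<le> l" "l < n * (p^(i' - 1) * repunit p (k - i' + 1))"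
    and j: "i' \<le> j" "j < k"
  shows "digit_term k j l = n"
proof -
  define e where "e = j - i'"
  define m where "m = k - j"
  have me: "k - i' = m + e" "k - i' + 1 = m + Suc e" "0 < m" unfolding m_def e_def using j by auto
  have pj: "p^j = p^i' * p^e" unfolding e_def using power_split[of i' j p] j by simp
  have "j - (i' - 1) = Suc e" unfolding e_def using j assms(1) by simp
  then have pj1: "p^j = p^(i' - 1) * p^(Suc e)" using power_split[of "i' - 1" j p] j by simp
  have "p^j * (n * repunit p m) \<le> n * (p^i' * repunit p (k - i'))" unfolding me(1) repunit_add pj by (simp add: algebra_simps)
  then have rl: "n * repunit p m \<le> l div p^j" using assms(3) by (intro le_div_pow) linarith
  have "n * repunit p (Suc e) < p^(Suc e)" using repunit_mult_less[of n "Suc e"] by simp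
  then have "p^(i' - 1) * (n * repunit p (Suc e)) \<le> p^(i' - 1) * p^(Suc e)" by simp
  then have "n * (p^(i' - 1) * repunit p (k - i' + 1)) \<le> p^j * (n * repunit p m + 1)"
    unfolding me(2) repunit_add pj1 by (simp add: algebra_simps)
  then have ru: "l div p^j \<le> n * repunit p m" using assms(4) by (intro div_pow_le) linarith
  have r: "l div p^j = n * repunit p m" using rl ru by simp
  have count: "count_below m (l div p^j) = n"
    unfolding r by (rule count_below_eq[OF me(3)]) (use repunit_pos[OF me(3)] p_eq n_pos in auto)
  have half: "lower_half k j l = 0" using lower_half_eq[of j k l] j r unfolding m_def by simp
  show ?thesis unfolding digit_term_def half m_def[symmetric] count by simp
qed

lemma digit_weight_case_d:
  assumes "1 \<le> i'" "i' + 1 \<le> k" "n * (p^i' * repunit p (k - i')) \<le> l" "l < n * (p^(i' - 1) * repunit p (k - i' + 1))"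
  shows "digit_weight k l = n * repunit p k + p * (p^(k - i') * repunit p i')"
proof -
  have "digit_weight k l = (p + n) * (p^(k - i') * repunit p i') + n * repunit p (k - i')"
    using assms(2) digit_term_case_d_low[OF assms] digit_term_case_d_high[OF assms] by (intro digit_weight_two_values) auto
  moreover have "repunit p k = repunit p i' * p^(k - i') + repunit p (k - i')"
    using repunit_add[of p i' "k - i'"] assms(2) by simp
  ultimately show ?thesis by (simp add: algebra_simps)
qed

lemma half_p: "(p - 1) div 2 = n"
  using p_eq by simp

lemma fibM_V_zero:
  assumes "0 < k" "k + 2 < s"
  shows "real (fibM p k (Vv s 0)) = fib_c p k s * fib_A p k s"
  using fibM_V_closed_form_real[OF assms(1) _ assms(2), of 0] digit_weight_zero[OF assms(1)] p_pos by simp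

lemma fibM_V_case_b:
  assumes "2 \<le> k" "k + 2 < s" "l < p^k" "i \<le> k - 2" "1 \<le> t" "t \<le> p - 1"
    "(t - 1) * (\<Sum>\<iota>=i..k-1. p ^ \<iota>) + p ^ i \<le> l"
    "l \<le> (t - 1) * (\<Sum>\<iota>=i+1..k-1. p ^ \<iota>) + p ^ (i + 1) - 1"
  shows "2 * t \<le> p - 1 \<Longrightarrow> real (fibM p k (Vv s l)) = fib_c p k s * (fib_A p k s
      + 2 * real t * real (repunit p k) - 2 * (\<Sum>\<mu>=0..k-i-2. real p ^ \<mu>))"
    and "p + 1 \<le> 2 * t \<Longrightarrow> real (fibM p k (Vv s l)) = fib_c p k s * (fib_A p k s
      + (2 * real t - 2 * real p) * real (repunit p k) - 2 * (\<Sum>\<mu>=0..k-i-2. real p ^ \<mu>))"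
proof -
  have ik: "i + 2 \<le> k" and k0: "0 < k" using assms(1,4) by linarith+
  have t: "t = Suc (t - 1)" "t < p" using assms(5,6) p_pos by linarith+
  have lo: "(t - 1) * (p^i * repunit p (k - i)) + p^i \<le> l"
    using assms(7) sum_power_atLeastAtMost[of i "k - 1" p, where 'a = nat] ik by simp
  have "(\<Sum>\<iota>=i+1..k-1. p ^ \<iota>) = p^(i + 1) * repunit p (k - i - 1)"
    using sum_power_atLeastAtMost[of "i + 1" "k - 1" p, where 'a = nat] ik by simp
  moreover have "0 < p^(i + 1)" using p_pos by simp
  ultimately have hi: "l < (t - 1) * (p^(i + 1) * repunit p (k - i - 1)) + p^(i + 1)"
    using assms(8) by (simp only:) linarith
  have W: "digit_weight k l + repunit p (k - i - 1) = (if t \<le> n then p + t else t) * repunit p k"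
    by (rule digit_weight_case_b[OF ik t lo hi])
  have mu: "(\<Sum>\<mu>=0..k-i-2. real p ^ \<mu>) = real (repunit p (k - i - 1))"
    using sum_power_atLeastAtMost[of 0 "k - i - 2" p, where 'a = real] ik by (simp add: Suc_diff_Suc numeral_2_eq_2)
  note M = fibM_V_closed_form_real[OF k0 assms(3,2)]
  show "2 * t \<le> p - 1 \<Longrightarrow> real (fibM p k (Vv s l)) = fib_c p k s * (fib_A p k s
      + 2 * real t * real (repunit p k) - 2 * (\<Sum>\<mu>=0..k-i-2. real p ^ \<mu>))"
  proof -
    assume "2 * t \<le> p - 1"
    then have "t \<le> n" using p_eq by simp
    then have "real (digit_weight k l) = (real p + real t) * real (repunit p k) - real (repunit p (k - i - 1))"
      using arg_cong[OF W, of real] by (simp add: algebra_simps)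
    then show ?thesis unfolding M mu by (simp only:) (simp add: algebra_simps)
  qed
  show "p + 1 \<le> 2 * t \<Longrightarrow> real (fibM p k (Vv s l)) = fib_c p k s * (fib_A p k s
      + (2 * real t - 2 * real p) * real (repunit p k) - 2 * (\<Sum>\<mu>=0..k-i-2. real p ^ \<mu>))"
  proof -
    assume "p + 1 \<le> 2 * t"
    then have "\<not> t \<le> n" using p_eq by simp
    then have "real (digit_weight k l) = real t * real (repunit p k) - real (repunit p (k - i - 1))"
      using arg_cong[OF W, of real] by (simp add: algebra_simps)
    then show ?thesis unfolding M mu by (simp only:) (simp add: algebra_simps)
  qed
qed

lemma fibM_V_case_c:
  assumes "0 < k" "k + 2 < s" "l < p^k" "1 \<le> t" "t \<le> p - 1" "2 * t \<noteq> p - 1"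
    "t * p ^ (k - 1) \<le> l" "l \<le> t * repunit p k"
  shows "2 * t \<le> p - 3 \<Longrightarrow> real (fibM p k (Vv s l)) = fib_c p k s * (fib_A p k s + 2 * real t * real (repunit p k))"
    and "p + 1 \<le> 2 * t \<Longrightarrow>
      real (fibM p k (Vv s l)) = fib_c p k s * (fib_A p k s + (2 * real t - 2 * real p) * real (repunit p k))"
proof -
  have W: "digit_weight k l = (if t \<le> n then p + t else t) * repunit p k"
    using assms p_eq by (intro digit_weight_case_c) auto
  have M: "real (fibM p k (Vv s l)) = fib_c p k s * (fib_A p k s - 2 * real p * real (repunit p k) + 2 * real (digit_weight k l))"
    using fibM_V_closed_form_real[OF assms(1,3,2)] .
  show "2 * t \<le> p - 3 \<Longrightarrow> real (fibM p k (Vv s l)) = fib_c p k s * (fib_A p k s + 2 * real t * real (repunit p k))"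
    using assms(4) p_eq unfolding M W by (simp add: algebra_simps)
  show "p + 1 \<le> 2 * t \<Longrightarrow>
      real (fibM p k (Vv s l)) = fib_c p k s * (fib_A p k s + (2 * real t - 2 * real p) * real (repunit p k))"
    using p_eq unfolding M W by (simp add: algebra_simps)
qed

lemma p_minus_half_repunit:
  assumes "2 \<le> k"
  shows "2 * (real p - real n) * real (repunit p k) = real p ^ k + 2 * (\<Sum>\<theta>=1..k-1. real p ^ \<theta>) + 1"
proof -
  have "2 * real n * real (repunit p k) = real p ^ k - 1"
    using arg_cong[OF repunit_pow[of k], of real] by simp
  moreover have "real p * real (repunit p k) = (\<Sum>\<theta>=1..k-1. real p ^ \<theta>) + real p ^ k"
  proof -
    have "repunit p k = repunit p (k - 1) + p^(k - 1)" using repunit_Suc'[of p "k - 1"] assms by simp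
    moreover have "real p * real p ^ (k - 1) = real p ^ k" using assms by (cases k) auto
    moreover have "(\<Sum>\<theta>=1..k-1. real p ^ \<theta>) = real p * real (repunit p (k - 1))"
      using sum_power_atLeastAtMost[of 1 "k - 1" p, where 'a = real] assms by simp
    ultimately show ?thesis by (simp add: algebra_simps)
  qed
  ultimately show ?thesis by (simp add: algebra_simps)
qed

lemma fibM_V_case_d:
  assumes "k + 2 < s" "l < p^k" "1 \<le> i'" "i' \<le> k - 1"
    "(p - 1) div 2 * (\<Sum>\<iota>=i'..k-1. p ^ \<iota>) \<le> l"
    "l \<le> (p - 1) div 2 * (\<Sum>\<iota>=i'-1..k-1. p ^ \<iota>) - 1"
  shows "real (fibM p k (Vv s l)) = fib_c p k s * (fib_A p k s - real p ^ k - 2 * (\<Sum>\<theta>=1..k-1. real p ^ \<theta>)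
      + 2 * (\<Sum>\<mu>=k-i'+1..k. real p ^ \<mu>) - 1)"
proof -
  have i: "1 \<le> i'" "i' + 1 \<le> k" "2 \<le> k" using assms(3,4) by auto
  have lo: "n * (p^i' * repunit p (k - i')) \<le> l"
    using assms(5) sum_power_atLeastAtMost[of i' "k - 1" p, where 'a = nat] i unfolding half_p by simp
  have "(\<Sum>\<iota>=i'-1..k-1. p ^ \<iota>) = p^(i' - 1) * repunit p (k - i' + 1)"
    using sum_power_atLeastAtMost[of "i' - 1" "k - 1" p, where 'a = nat] i by (simp add: Suc_diff_le)
  moreover have "0 < n * (p^(i' - 1) * repunit p (k - i' + 1))" using n_pos p_pos repunit_pos by simp
  ultimately have hi: "l < n * (p^(i' - 1) * repunit p (k - i' + 1))"
    using assms(6) unfolding half_p by (simp only:) linarith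
  have W: "real (digit_weight k l) = real n * real (repunit p k) + real p * (real p ^ (k - i') * real (repunit p i'))"
    using digit_weight_case_d[OF i(1,2) lo hi] by simp
  have mu: "(\<Sum>\<mu>=k-i'+1..k. real p ^ \<mu>) = real p * (real p ^ (k - i') * real (repunit p i'))"
    using sum_power_atLeastAtMost[of "k - i' + 1" k p, where 'a = real] i by simp
  have "fib_A p k s - 2 * real p * real (repunit p k) + 2 * real (digit_weight k l)
      = fib_A p k s - real p ^ k - 2 * (\<Sum>\<theta>=1..k-1. real p ^ \<theta>) + 2 * (\<Sum>\<mu>=k-i'+1..k. real p ^ \<mu>) - 1"
    unfolding W mu using p_minus_half_repunit[OF i(3)] by (simp add: algebra_simps)
  then show ?thesis using fibM_V_closed_form_real[OF _ assms(2,1)] i by simp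
qed

lemma fibM_V_case_e:
  assumes "2 \<le> k" "k + 2 < s"
  shows "real (fibM p k (Vv s ((p - 1) div 2 * repunit p k)))
    = fib_c p k s * (fib_A p k s - real p ^ k - 2 * (\<Sum>\<theta>=1..k-1. real p ^ \<theta>) - 1)"
proof -
  have "n * repunit p k < p^k" using repunit_mult_less[of n k] by simp
  then have "real (fibM p k (Vv s (n * repunit p k))) = fib_c p k s * (fib_A p k s
      - 2 * real p * real (repunit p k) + 2 * real (digit_weight k (n * repunit p k)))"
    using assms by (intro fibM_V_closed_form_real) auto
  moreover have "fib_A p k s - 2 * real p * real (repunit p k) + 2 * real (digit_weight k (n * repunit p k))
      = fib_A p k s - real p ^ k - 2 * (\<Sum>\<theta>=1..k-1. real p ^ \<theta>) - 1"
    using digit_weight_half[of k] p_minus_half_repunit[OF assms(1)] assms(1) by (simp add: algebra_simps)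
  ultimately show ?thesis unfolding half_p by simp
qed

end

theorem mainTheorem8:
  fixes p k s l :: nat
  assumes "prime p" and "odd p" and "2 \<le> k" and "k + 2 < s" and "l < p ^ k"
  defines "S \<equiv> (\<Sum>j<k. p ^ j)"
    and "A \<equiv> 2 * (real s - 1) * real p ^ (k + 1) - 2 * (real s - real k) + 3"
    and "c \<equiv> real p ^ (s - 2 - k) * (real p - 1) / 2"
    and "M \<equiv> real (fibM p k (Vv s l))"
  shows
    "(l = 0 \<longrightarrow> M = c * A)
   \<and> (\<forall>i t. i \<le> k - 2 \<and> 1 \<le> t \<and> t \<le> p - 1
        \<and> (t - 1) * (\<Sum>\<iota>=i..k-1. p ^ \<iota>) + p ^ i \<le> l
        \<and> l \<le> (t - 1) * (\<Sum>\<iota>=i+1..k-1. p ^ \<iota>) + p ^ (i + 1) - 1 \<longrightarrow>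
        (2 * t \<le> p - 1 \<longrightarrow>
           M = c * (A + 2 * real t * real S - 2 * (\<Sum>\<mu>=0..k-i-2. real p ^ \<mu>)))
      \<and> (p + 1 \<le> 2 * t \<longrightarrow>
           M = c * (A + (2 * real t - 2 * real p) * real S - 2 * (\<Sum>\<mu>=0..k-i-2. real p ^ \<mu>))))
   \<and> (\<forall>t. 1 \<le> t \<and> t \<le> p - 1 \<and> 2 * t \<noteq> p - 1
        \<and> t * p ^ (k - 1) \<le> l \<and> l \<le> t * S \<longrightarrow>
        (2 * t \<le> p - 3 \<longrightarrow> M = c * (A + 2 * real t * real S))
      \<and> (p + 1 \<le> 2 * t \<longrightarrow> M = c * (A + (2 * real t - 2 * real p) * real S)))
   \<and> (\<forall>i'. 1 \<le> i' \<and> i' \<le> k - 1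
        \<and> (p - 1) div 2 * (\<Sum>\<iota>=i'..k-1. p ^ \<iota>) \<le> l
        \<and> l \<le> (p - 1) div 2 * (\<Sum>\<iota>=i'-1..k-1. p ^ \<iota>) - 1 \<longrightarrow>
        M = c * (A - real p ^ k - 2 * (\<Sum>\<theta>=1..k-1. real p ^ \<theta>)
                 + 2 * (\<Sum>\<mu>=k-i'+1..k. real p ^ \<mu>) - 1))
   \<and> (l = (p - 1) div 2 * S \<longrightarrow>
        M = c * (A - real p ^ k - 2 * (\<Sum>\<theta>=1..k-1. real p ^ \<theta>) - 1))"
proof -
  have "p = 2 * ((p - 1) div 2) + 1" "0 < (p - 1) div 2"
    using \<open>odd p\<close> prime_ge_2_nat[OF \<open>prime p\<close>] by presburger+
  then interpret odd_base p "(p - 1) div 2" by unfold_locales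
  have k: "0 < k" using \<open>2 \<le> k\<close> by simp
  have S: "S = repunit p k" unfolding S_def repunit_def ..
  have cA: "c = fib_c p k s" "A = fib_A p k s" unfolding c_def A_def fib_c_def fib_A_def by (rule refl)+
  show ?thesis
    unfolding M_def S cA
    using fibM_V_zero[OF k assms(4)] fibM_V_case_b[OF assms(3,4,5)] fibM_V_case_c[OF k assms(4,5)]
      fibM_V_case_d[OF assms(4,5)] fibM_V_case_e[OF assms(3,4)]
    by blast
qed

end
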